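(* Let $1\le p<\infty$ and $0<\delta<1$. There is a constant $c=c_{n,\delta}$ such that \[ \|f\|_{L^{p,\infty}}\le c\,p\,\|M^{\sharp,d}_{\delta}f\|_{L^{p,\infty}} \] for every locally integrable function $f$ on $\mathbb{R}^n$ such that $|\{x:|f(x)|>t\}|<\infty$ for every $t>0$.
   Context: For $0<s<\infty$, the sharp maximal function is $M^{\sharp}_s f(x)=\sup_{Q\ni x}\big(\frac1{|Q|}\int_Q|f-f_Q|^s\big)^{1/s}$, with $f_Q=\frac1{|Q|}\int_Q f$; $M^{\sharp,d}_s$ denotes the same supremum taken only over dyadic cubes containing $x$. Norms are unweighted on $\mathbb{R}^n$, with $\|g\|_{L^{p,\infty}}=\sup_{\lambda>0}\lambda|\{|g|>\lambda\}|^{1/p}$. *)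

theory Defs
  imports "HOL-Analysis.Analysis"
begin

definition dyadic_cubes :: "(real ^ 'n) set set" where
  "dyadic_cubes = {Q. \<exists>(k::int) (m::'n \<Rightarrow> int).
      Q = {x. \<forall>i. 2 powr k * of_int (m i) \<le> x $ i \<and> x $ i < 2 powr k * (of_int (m i) + 1)}}"

definition cube_avg :: "(real ^ 'n \<Rightarrow> real) \<Rightarrow> (real ^ 'n) set \<Rightarrow> real" where
  "cube_avg f Q = (\<integral>x\<in>Q. f x \<partial>lebesgue) / measure lebesgue Q"

definition mean_osc :: "real \<Rightarrow> (real ^ 'n \<Rightarrow> real) \<Rightarrow> (real ^ 'n) set \<Rightarrow> real" where
  "mean_osc s f Q = ((\<integral>x\<in>Q. \<bar>f x - cube_avg f Q\<bar> powr s \<partial>lebesgue) / measure lebesgue Q) powr (1 / s)"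

definition sharp_max_dyadic :: "real \<Rightarrow> (real ^ 'n \<Rightarrow> real) \<Rightarrow> real ^ 'n \<Rightarrow> ennreal" where
  "sharp_max_dyadic s f x = (SUP Q\<in>{Q\<in>dyadic_cubes. x \<in> Q}. ennreal (mean_osc s f Q))"

definition weak_Lp_norm :: "real \<Rightarrow> (real ^ 'n \<Rightarrow> ennreal) \<Rightarrow> ennreal" where
  "weak_Lp_norm p g = (SUP t\<in>{0<..}.
      (if emeasure lebesgue {x. ennreal t < g x} = \<infinity> then \<infinity>
       else ennreal (t * measure lebesgue {x. ennreal t < g x} powr (1 / p))))"

definition locally_integrable :: "(real ^ 'n \<Rightarrow> real) \<Rightarrow> bool" where
  "locally_integrable f \<longleftrightarrow> f \<in> borel_measurable lebesgue \<and>
     (\<forall>K. compact K \<longrightarrow> set_integrable lebesgue K f)"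

end

theory Submission
  imports Defs
begin

text \<open>A good-\<open>\<lambda>\<close> argument. Fix a level \<open>s\<close>, a small \<open>\<theta>\<close>, and the scales \<open>\<eta>_k = \<theta> s 2^-k\<close>. If
  \<open>N\<close> bounds the weak norm of \<open>M^{#,d}_\<delta> f\<close>, the level sets \<open>E_k = {M^{#,d}_\<delta> f > \<eta>_k}\<close> have
  measure at most \<open>(N/\<eta>_k)^p\<close>. A dyadic cube \<open>C\<close> of measure comparable to \<open>(N/\<theta>s)^p\<close> is not
  contained in the corresponding \<open>E_K\<close>, so it has oscillation at most \<open>\<eta>_K\<close>, and as \<open>|f|\<close> is
  mostly small on it, \<open>|f_C| \<le> s/4\<close>. Inside \<open>C\<close>, a John--Nirenberg inequality for the
  \<open>\<delta>\<close>-oscillation, proved by a stopping time, shows that outside \<open>E_0\<close> the set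
  \<open>{|f - f_C| > s/2}\<close> has measure at most \<open>2^-(K+1)q |C| + \<Sum>_(k<K) 2^-(k+1)q |E_(k+1) \<inter> C|\<close>;
  with \<open>q > p\<close> the geometric growth of \<open>(N/\<eta>_k)^p\<close> keeps this below \<open>(N/\<theta>s)^p\<close>. Exhausting
  \<open>\<real>^n\<close> by the \<open>2^n\<close> increasing families of quadrant cubes gives \<open>|{|f| > s}| \<le> 2^(n+1) (N/\<theta>s)^p\<close>, and the
  choice \<open>\<theta> \<sim> 1/p\<close> produces the factor \<open>p\<close>.\<close>

section \<open>Dyadic cubes\<close>

definition dyadic_index :: "int \<Rightarrow> real^'n \<Rightarrow> 'n \<Rightarrow> int" where
  "dyadic_index k x = (\<lambda>i. \<lfloor>x $ i / 2 powr k\<rfloor>)"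

definition dyadic_cube :: "int \<Rightarrow> ('n \<Rightarrow> int) \<Rightarrow> (real^'n) set" where
  "dyadic_cube k m = {x. dyadic_index k x = m}"

lemma mem_dyadic_cube: "x \<in> dyadic_cube k m \<longleftrightarrow> dyadic_index k x = m"
  by (simp add: dyadic_cube_def)

lemma dyadic_cube_eq_box:
  fixes m :: "'n::finite \<Rightarrow> int"
  shows "{x. \<forall>i. 2 powr k * of_int (m i) \<le> x $ i \<and> x $ i < 2 powr k * (of_int (m i) + 1)}
    = dyadic_cube k m"
proof -
  have "(2 powr k * of_int (m i) \<le> x $ i \<and> x $ i < 2 powr k * (of_int (m i) + 1))
     \<longleftrightarrow> \<lfloor>x $ i / 2 powr k\<rfloor> = m i" for x :: "real^'n" and i
    by (simp add: floor_eq_iff pos_le_divide_eq pos_divide_less_eq mult.commute)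
  then show ?thesis unfolding dyadic_cube_def dyadic_index_def fun_eq_iff by auto
qed

lemma dyadic_cubes_iff: "Q \<in> dyadic_cubes \<longleftrightarrow> (\<exists>k m. Q = dyadic_cube k m)"
  unfolding dyadic_cubes_def dyadic_cube_eq_box by auto

lemma dyadic_cube_in_dyadic_cubes [simp]: "dyadic_cube k m \<in> dyadic_cubes"
  using dyadic_cubes_iff by blast

lemma dyadic_cube_subset_coarser:
  assumes "k \<le> k'"
  shows "dyadic_cube k (dyadic_index k x) \<subseteq> dyadic_cube k' (dyadic_index k' x)"
proof
  fix y assume "y \<in> dyadic_cube k (dyadic_index k x)"
  then have eq: "dyadic_index k y = dyadic_index k x" by (simp add: mem_dyadic_cube)
  obtain d :: nat where k': "k' = k + int d" using assms by (metis le_add_diff_inverse zle_iff_zadd)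
  have coarsen: "dyadic_index k' z i = dyadic_index k z i div 2 ^ d" for z :: "real^'a" and i
  proof -
    have "2 powr real_of_int k' = 2 powr real_of_int k * 2 ^ d"
      by (simp add: k' powr_add powr_realpow)
    then have "\<lfloor>z $ i / 2 powr k'\<rfloor> = \<lfloor>(z $ i / 2 powr k) / real_of_int (2 ^ d)\<rfloor>" by simp
    also have "\<dots> = \<lfloor>z $ i / 2 powr k\<rfloor> div 2 ^ d" by (rule floor_divide_real_eq_div) simp
    finally show ?thesis by (simp add: dyadic_index_def)
  qed
  show "y \<in> dyadic_cube k' (dyadic_index k' x)"
    using eq by (simp add: mem_dyadic_cube coarsen fun_eq_iff)
qed

lemma dyadic_cube_box_bounds:
  fixes k :: int and m :: "'n::finite \<Rightarrow> int"
  defines "a \<equiv> (\<chi> i. 2 powr k * of_int (m i)) :: real^'n"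
    and "b \<equiv> (\<chi> i. 2 powr k * (of_int (m i) + 1)) :: real^'n"
  shows "box a b \<subseteq> dyadic_cube k m" "dyadic_cube k m \<subseteq> cbox a b"
  unfolding dyadic_cube_eq_box[symmetric] a_def b_def
  by (auto simp: mem_box_cart less_imp_le)

lemma dyadic_cube_borel [measurable]: "dyadic_cube k (m::'n::finite \<Rightarrow> int) \<in> sets borel"
proof -
  have "dyadic_cube k m = (\<Inter>i. {x. 2 powr k * of_int (m i) \<le> x $ i}
      \<inter> {x. x $ i < 2 powr k * (of_int (m i) + 1)})"
    unfolding dyadic_cube_eq_box[symmetric] by auto
  also have "\<dots> \<in> sets borel"
    by (intro sets.countable_INT' countable_finite) auto
  finally show ?thesis .
qed

lemma dyadic_cube_lebesgue [measurable]: "dyadic_cube k (m::'n::finite \<Rightarrow> int) \<in> sets lebesgue"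
  by (simp add: sets_completionI_sets)

lemma emeasure_dyadic_cube:
  fixes m :: "'n::finite \<Rightarrow> int"
  shows "emeasure lebesgue (dyadic_cube k m) = ennreal ((2 powr k) ^ CARD('n))"
proof -
  define a where "a \<equiv> (\<chi> i. 2 powr k * of_int (m i)) :: real^'n"
  define b where "b \<equiv> (\<chi> i. 2 powr k * (of_int (m i) + 1)) :: real^'n"
  have le: "\<forall>e\<in>Basis. a \<bullet> e \<le> b \<bullet> e"
    by (auto simp: a_def b_def Basis_vec_def inner_axis)
  have "emeasure lborel (cbox a b) = ennreal (measure lborel (cbox a b))"
    by (rule emeasure_eq_ennreal_measure) (use emeasure_lborel_cbox_finite[of a b] in auto)
  also have "measure lborel (cbox a b) = (\<Prod>i\<in>UNIV. b $ i - a $ i)"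
    using le by (intro content_cbox_cart) (simp add: box_ne_empty)
  also have "\<dots> = (2 powr k) ^ CARD('n)"
    by (simp add: a_def b_def algebra_simps)
  finally have cbox: "emeasure lborel (cbox a b) = ennreal ((2 powr k) ^ CARD('n))" .
  have box: "emeasure lborel (box a b) = emeasure lborel (cbox a b)"
    using le by (simp add: emeasure_lborel_box_eq emeasure_lborel_cbox_eq)
  have "emeasure lborel (box a b) \<le> emeasure lborel (dyadic_cube k m)"
    using dyadic_cube_box_bounds(1)[of k m] by (intro emeasure_mono) (auto simp: a_def b_def)
  moreover have "emeasure lborel (dyadic_cube k m) \<le> emeasure lborel (cbox a b)"
    using dyadic_cube_box_bounds(2)[of k m] by (intro emeasure_mono) (auto simp: a_def b_def)
  moreover have "emeasure lebesgue (dyadic_cube k m) = emeasure lborel (dyadic_cube k m)"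
    by (simp add: main_part_sets)
  ultimately show ?thesis using box cbox by (metis antisym)
qed

lemma measure_dyadic_cube:
  "measure lebesgue (dyadic_cube k (m::'n::finite \<Rightarrow> int)) = (2 powr k) ^ CARD('n)"
  by (simp add: measure_def emeasure_dyadic_cube)

lemma dyadic_cube_nonempty: "dyadic_cube k (m::'n::finite \<Rightarrow> int) \<noteq> {}"
proof -
  have "(\<chi> i. 2 powr k * of_int (m i)) \<in> dyadic_cube k m"
    unfolding dyadic_cube_eq_box[symmetric] by simp
  then show ?thesis by blast
qed

lemma dyadic_cube_level_le:
  assumes "dyadic_cube k m \<subseteq> dyadic_cube k' (m'::'n::finite \<Rightarrow> int)"
  shows "k \<le> k'"
proof -
  have "measure lebesgue (dyadic_cube k m) \<le> measure lebesgue (dyadic_cube k' m')"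
    using assms by (intro measure_mono_fmeasurable) (auto simp: fmeasurable_def emeasure_dyadic_cube)
  then have "(2 powr k) ^ CARD('n) \<le> (2 powr k') ^ CARD('n)"
    by (simp only: measure_dyadic_cube)
  then have "2 powr k \<le> 2 powr k'"
    using power_mono_iff[of "2 powr k" "2 powr k'" "CARD('n)"] by simp
  then show ?thesis by simp
qed

lemma dyadic_cube_inj:
  assumes "dyadic_cube k m = dyadic_cube k' (m'::'n::finite \<Rightarrow> int)"
  shows "k = k'" "m = m'"
proof -
  show "k = k'"
    using dyadic_cube_level_le[of k m k' m'] dyadic_cube_level_le[of k' m' k m] assms by auto
  moreover obtain x where "x \<in> dyadic_cube k m" using dyadic_cube_nonempty by blast
  moreover from this have "x \<in> dyadic_cube k' m'" using assms by simp
  ultimately show "m = m'" by (simp add: mem_dyadic_cube)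
qed

definition dyadic_level :: "(real^'n::finite) set \<Rightarrow> int" where
  "dyadic_level S = (THE k. \<exists>m. S = dyadic_cube k m)"

lemma dyadic_level_cube [simp]: "dyadic_level (dyadic_cube k (m::'n::finite \<Rightarrow> int)) = k"
  unfolding dyadic_level_def by (rule the_equality) (auto dest: dyadic_cube_inj)

lemma dyadic_cubes_repr:
  assumes "S \<in> dyadic_cubes" "x \<in> S"
  shows "S = dyadic_cube (dyadic_level S) (dyadic_index (dyadic_level S) x)"
  using assms by (auto simp: dyadic_cubes_iff mem_dyadic_cube)

lemma dyadic_cubes_sets [measurable]: "S \<in> dyadic_cubes \<Longrightarrow> S \<in> sets lebesgue"
  by (auto simp: dyadic_cubes_iff)

lemma dyadic_cubes_nonempty: "S \<in> dyadic_cubes \<Longrightarrow> S \<noteq> {}"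
  by (auto simp: dyadic_cubes_iff dyadic_cube_nonempty)

lemma measure_dyadic_cubes:
  fixes S :: "(real^'n::finite) set"
  shows "S \<in> dyadic_cubes \<Longrightarrow> measure lebesgue S = (2 powr dyadic_level S) ^ CARD('n)"
  by (auto simp: dyadic_cubes_iff measure_dyadic_cube)

lemma emeasure_dyadic_cubes:
  "S \<in> dyadic_cubes \<Longrightarrow> emeasure lebesgue S = ennreal (measure lebesgue S)"
  by (auto simp: dyadic_cubes_iff emeasure_dyadic_cube measure_dyadic_cube
      simp del: emeasure_completion)

lemma dyadic_cubes_measure_pos: "S \<in> dyadic_cubes \<Longrightarrow> 0 < measure lebesgue S"
  by (simp add: measure_dyadic_cubes)

lemma dyadic_cubes_fmeasurable: "S \<in> dyadic_cubes \<Longrightarrow> S \<in> fmeasurable lebesgue"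
  by (auto simp: dyadic_cubes_iff fmeasurable_def emeasure_dyadic_cube simp del: emeasure_completion)

lemma dyadic_cubes_emeasure_finite: "S \<in> dyadic_cubes \<Longrightarrow> emeasure lebesgue S < \<infinity>"
  using emeasure_dyadic_cubes[of S] by (simp del: emeasure_completion)

lemma dyadic_level_mono:
  "S \<in> dyadic_cubes \<Longrightarrow> T \<in> dyadic_cubes \<Longrightarrow> S \<subseteq> T \<Longrightarrow> dyadic_level S \<le> dyadic_level T"
  by (auto simp: dyadic_cubes_iff dyadic_cube_level_le)

lemma dyadic_cube_subset_at_level:
  assumes "S \<in> dyadic_cubes" "x \<in> S" "k \<le> dyadic_level S"
  shows "dyadic_cube k (dyadic_index k x) \<subseteq> S"
  using dyadic_cube_subset_coarser[OF assms(3), of x] dyadic_cubes_repr[OF assms(1,2)] by simp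

lemma dyadic_cubes_subset_of_level_le:
  assumes "S \<in> dyadic_cubes" "T \<in> dyadic_cubes" "x \<in> S" "x \<in> T"
    and "dyadic_level S \<le> dyadic_level T"
  shows "S \<subseteq> T"
  using dyadic_cube_subset_at_level[OF assms(2,4,5)] dyadic_cubes_repr[OF assms(1,3)] by simp

lemma dyadic_cubes_disjoint_or_nested:
  assumes "S \<in> dyadic_cubes" "T \<in> dyadic_cubes"
  shows "S \<inter> T = {} \<or> S \<subseteq> T \<or> T \<subseteq> S"
proof (cases "S \<inter> T = {}")
  case False
  then obtain x where "x \<in> S" "x \<in> T" by blast
  then show ?thesis
    using dyadic_cubes_subset_of_level_le[OF assms] dyadic_cubes_subset_of_level_le[OF assms(2,1)]
    by fastforce
qed simp

lemma dyadic_level_strict_mono: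
  assumes "S \<in> dyadic_cubes" "T \<in> dyadic_cubes" "S \<subset> T"
  shows "dyadic_level S < dyadic_level T"
proof -
  obtain x where "x \<in> S" using dyadic_cubes_nonempty[OF assms(1)] by blast
  then have "dyadic_level S \<noteq> dyadic_level T"
    using dyadic_cubes_repr[OF assms(1)] dyadic_cubes_repr[OF assms(2)] assms(3) by fastforce
  then show ?thesis using dyadic_level_mono[OF assms(1,2)] assms(3) by fastforce
qed

lemma countable_dyadic_cubes: "countable (dyadic_cubes :: (real^'n::finite) set set)"
proof -
  have "(dyadic_cubes :: (real^'n) set set) = (\<lambda>(k, m). dyadic_cube k m) ` UNIV"
    by (force simp: dyadic_cubes_iff)
  then show ?thesis by (metis countable_image countableI_type)
qed

definition dyadic_parent :: "(real^'n::finite) set \<Rightarrow> (real^'n) set" where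
  "dyadic_parent S = dyadic_cube (dyadic_level S + 1) (dyadic_index (dyadic_level S + 1) (SOME x. x \<in> S))"

lemma
  fixes S :: "(real^'n::finite) set"
  assumes S: "S \<in> dyadic_cubes"
  shows dyadic_parent_in_dyadic_cubes: "dyadic_parent S \<in> dyadic_cubes"
    and dyadic_level_parent: "dyadic_level (dyadic_parent S) = dyadic_level S + 1"
    and subset_dyadic_parent: "S \<subseteq> dyadic_parent S"
    and dyadic_parent_neq: "dyadic_parent S \<noteq> S"
    and measure_dyadic_parent:
      "measure lebesgue (dyadic_parent S) = 2 ^ CARD('n) * measure lebesgue S"
proof -
  define x where "x = (SOME x. x \<in> S)"
  have x: "x \<in> S" unfolding x_def using dyadic_cubes_nonempty[OF S] by (simp add: some_in_eq)
  show P: "dyadic_parent S \<in> dyadic_cubes" by (simp add: dyadic_parent_def)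
  show L: "dyadic_level (dyadic_parent S) = dyadic_level S + 1" by (simp add: dyadic_parent_def)
  have "x \<in> dyadic_parent S" unfolding dyadic_parent_def x_def[symmetric] by (simp add: mem_dyadic_cube)
  then show "S \<subseteq> dyadic_parent S" by (rule dyadic_cubes_subset_of_level_le[OF S P x]) (simp add: L)
  show "dyadic_parent S \<noteq> S" using L by auto
  have "2 powr real_of_int (dyadic_level S + 1) = 2 * 2 powr dyadic_level S"
    by (simp add: powr_add)
  then show "measure lebesgue (dyadic_parent S) = 2 ^ CARD('n) * measure lebesgue S"
    using measure_dyadic_cubes[OF P] measure_dyadic_cubes[OF S] L by (simp add: power_mult_distrib)
qed

lemma dyadic_parent_subset:
  assumes "S \<in> dyadic_cubes" "T \<in> dyadic_cubes" "S \<subset> T"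
  shows "dyadic_parent S \<subseteq> T"
proof -
  obtain x where x: "x \<in> S" using dyadic_cubes_nonempty[OF assms(1)] by blast
  then have "x \<in> dyadic_parent S" using subset_dyadic_parent[OF assms(1)] by auto
  moreover have "x \<in> T" using x assms(3) by auto
  ultimately show ?thesis
    using dyadic_level_strict_mono[OF assms] dyadic_level_parent[OF assms(1)]
    by (intro dyadic_cubes_subset_of_level_le[OF dyadic_parent_in_dyadic_cubes[OF assms(1)] assms(2)]) auto
qed

definition maximal_cubes :: "(real^'n::finite) set set \<Rightarrow> (real^'n) set set" where
  "maximal_cubes F = {T\<in>F. \<forall>T'\<in>F. T \<subseteq> T' \<longrightarrow> T' = T}"

lemma maximal_cubes_subset: "maximal_cubes F \<subseteq> F"
  by (auto simp: maximal_cubes_def)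

lemma countable_maximal_cubes: "F \<subseteq> dyadic_cubes \<Longrightarrow> countable (maximal_cubes F)"
  by (meson countable_dyadic_cubes countable_subset maximal_cubes_subset order_trans)

lemma maximal_cubes_disjoint:
  assumes "F \<subseteq> dyadic_cubes"
  shows "disjoint_family_on (\<lambda>T. T) (maximal_cubes F)"
  unfolding disjoint_family_on_def
proof (intro ballI impI)
  fix T1 T2 assume T: "T1 \<in> maximal_cubes F" "T2 \<in> maximal_cubes F" "T1 \<noteq> T2"
  then have "T1 \<in> dyadic_cubes" "T2 \<in> dyadic_cubes" using assms by (auto simp: maximal_cubes_def)
  then show "T1 \<inter> T2 = {}"
    using dyadic_cubes_disjoint_or_nested[of T1 T2] T by (auto simp: maximal_cubes_def)
qed

text \<open>The members of \<open>F\<close> containing a point of \<open>S\<close> form a chain, finite by the level bound.\<close>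
lemma maximal_cubes_exists:
  assumes F: "F \<subseteq> dyadic_cubes" and S: "S \<in> F" and bound: "\<And>T. T \<in> F \<Longrightarrow> dyadic_level T \<le> K"
  shows "\<exists>T\<in>maximal_cubes F. S \<subseteq> T"
proof -
  have Sd: "S \<in> dyadic_cubes" using F S by auto
  obtain x where x: "x \<in> S" using dyadic_cubes_nonempty[OF Sd] by blast
  define A where "A = {k. dyadic_level S \<le> k \<and> dyadic_cube k (dyadic_index k x) \<in> F}"
  have "A \<subseteq> {dyadic_level S..K}" unfolding A_def using bound by fastforce
  then have finA: "finite A" by (rule finite_subset) simp
  have "dyadic_level S \<in> A" unfolding A_def using dyadic_cubes_repr[OF Sd x] S by auto
  then have kA: "Max A \<in> A" using finA by (intro Max_in) auto
  define T where "T = dyadic_cube (Max A) (dyadic_index (Max A) x)"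
  have xT: "x \<in> T" by (simp add: T_def mem_dyadic_cube)
  have "T' = T" if T'F: "T' \<in> F" and TT': "T \<subseteq> T'" for T'
  proof -
    have T'd: "T' \<in> dyadic_cubes" using F T'F by auto
    have r: "T' = dyadic_cube (dyadic_level T') (dyadic_index (dyadic_level T') x)"
      using dyadic_cubes_repr[OF T'd] xT TT' by auto
    have "Max A \<le> dyadic_level T'" using dyadic_level_mono[OF _ T'd TT'] by (simp add: T_def)
    then have "dyadic_level T' \<in> A" using r T'F kA by (auto simp: A_def)
    then have "dyadic_level T' = Max A" using finA \<open>Max A \<le> dyadic_level T'\<close> by (simp add: antisym)
    then show "T' = T" using r by (simp add: T_def)
  qed
  moreover have "T \<in> F" using kA by (simp add: A_def T_def)
  moreover have "S \<subseteq> T"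
    by (rule dyadic_cubes_subset_of_level_le[OF Sd _ x xT]) (use kA in \<open>auto simp: A_def T_def\<close>)
  ultimately show ?thesis unfolding maximal_cubes_def by blast
qed

lemma emeasure_Union_dyadic_cubes:
  assumes "countable M" "disjoint_family_on (\<lambda>S. S) M" "M \<subseteq> dyadic_cubes"
  shows "emeasure lebesgue (\<Union>M) = (\<integral>\<^sup>+S. emeasure lebesgue S \<partial>count_space M)"
  using emeasure_UN_countable[of M "\<lambda>S. S" lebesgue] assms dyadic_cubes_sets by auto

lemma dyadic_cubes_shrink_into_open:
  fixes x :: "real^'n::finite"
  assumes "open U" "x \<in> U"
  shows "\<exists>k0. \<forall>k\<le>k0. dyadic_cube k (dyadic_index k x) \<subseteq> U"
proof -
  obtain e where e: "e > 0" "ball x e \<subseteq> U" using assms open_contains_ball by blast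
  have c: "real CARD('n) > 0" by simp
  obtain n :: nat where n: "(1/2) ^ n < e / real CARD('n)"
    using real_arch_pow_inv[of "e / real CARD('n)" "1/2"] e c by auto
  have "dyadic_cube k (dyadic_index k x) \<subseteq> ball x e" if k: "k \<le> - int n" for k
  proof
    fix y assume y: "y \<in> dyadic_cube k (dyadic_index k x)"
    have "2 powr k \<le> 2 powr real_of_int (- int n)" using k by simp
    also have "\<dots> = (1/2) ^ n" by (simp add: powr_minus powr_realpow power_one_over inverse_eq_divide)
    finally have side: "2 powr k < e / real CARD('n)" using n by linarith
    have "\<bar>(y - x) $ i\<bar> < 2 powr k" for i
    proof -
      have "x \<in> dyadic_cube k (dyadic_index k x)" by (simp add: mem_dyadic_cube)
      with y show ?thesis unfolding dyadic_cube_eq_box[symmetric]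
        by (auto simp: algebra_simps abs_less_iff dest!: spec[of _ i])
    qed
    then have "dist x y < (\<Sum>i\<in>(UNIV::'n set). e / real CARD('n))"
      using norm_le_l1_cart[of "y - x"] side
      by (smt (verit, ccfv_SIG) dist_norm norm_minus_commute sum_strict_mono finite UNIV_not_empty)
    then show "y \<in> ball x e" using c by simp
  qed
  then show ?thesis using e by blast
qed

lemma subset_Union_maximal_cubes_in_open:
  fixes P :: "(real^'n::finite) set"
  assumes P: "P \<in> dyadic_cubes" and "B \<subseteq> P" "open T" "B \<subseteq> T"
  shows "B \<subseteq> \<Union>(maximal_cubes {S\<in>dyadic_cubes. S \<subseteq> T \<inter> P})"
proof
  define F where "F = {S\<in>dyadic_cubes. S \<subseteq> T \<inter> P}"
  have F: "F \<subseteq> dyadic_cubes" and bound: "\<And>S. S \<in> F \<Longrightarrow> dyadic_level S \<le> dyadic_level P"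
    using dyadic_level_mono[OF _ P] by (auto simp: F_def)
  fix x assume x: "x \<in> B"
  then have xP: "x \<in> P" "x \<in> T" using assms by auto
  obtain k0 where k0: "\<forall>k\<le>k0. dyadic_cube k (dyadic_index k x) \<subseteq> T"
    using dyadic_cubes_shrink_into_open[OF \<open>open T\<close> xP(2)] by blast
  define k where "k = min k0 (dyadic_level P)"
  have "dyadic_cube k (dyadic_index k x) \<subseteq> P"
    by (rule dyadic_cube_subset_at_level[OF P xP(1)]) (simp add: k_def)
  moreover have "dyadic_cube k (dyadic_index k x) \<subseteq> T" using k0 by (simp add: k_def)
  ultimately have "dyadic_cube k (dyadic_index k x) \<in> F" by (simp add: F_def)
  from maximal_cubes_exists[OF F this bound]
  obtain M where "M \<in> maximal_cubes F" "dyadic_cube k (dyadic_index k x) \<subseteq> M" by blast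
  moreover have "x \<in> dyadic_cube k (dyadic_index k x)" by (simp add: mem_dyadic_cube)
  ultimately show "x \<in> \<Union>(maximal_cubes {S\<in>dyadic_cubes. S \<subseteq> T \<inter> P})"
    unfolding F_def by blast
qed

lemma emeasure_le_dyadic_density_open:
  fixes B P :: "(real^'n::finite) set"
  assumes P: "P \<in> dyadic_cubes" and BP: "B \<subseteq> P" and B: "B \<in> sets lebesgue"
    and density: "\<And>S. S \<in> dyadic_cubes \<Longrightarrow> S \<subseteq> P \<Longrightarrow>
        emeasure lebesgue (S \<inter> B) \<le> ennreal \<theta> * emeasure lebesgue S"
    and T: "open T" "B \<subseteq> T"
  shows "emeasure lebesgue B \<le> ennreal \<theta> * emeasure lebesgue T"
proof -
  define F where "F = {S\<in>dyadic_cubes. S \<subseteq> T \<inter> P}"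
  define M where "M = maximal_cubes F"
  have F: "F \<subseteq> dyadic_cubes" by (auto simp: F_def)
  have M: "countable M" "disjoint_family_on (\<lambda>S. S) M"
    using countable_maximal_cubes[OF F] maximal_cubes_disjoint[OF F] by (simp_all add: M_def)
  have MF: "S \<in> dyadic_cubes" "S \<subseteq> T \<inter> P" if "S \<in> M" for S
    using maximal_cubes_subset that by (auto simp: M_def F_def)
  have "B = (\<Union>S\<in>M. S \<inter> B)"
    using subset_Union_maximal_cubes_in_open[OF P BP T] by (auto simp: M_def F_def)
  moreover have "disjoint_family_on (\<lambda>S. S \<inter> B) M"
    using M(2) unfolding disjoint_family_on_def by blast
  ultimately have "emeasure lebesgue B = (\<integral>\<^sup>+S. emeasure lebesgue (S \<inter> B) \<partial>count_space M)"
    using emeasure_UN_countable[of M "\<lambda>S. S \<inter> B" lebesgue] M(1) MF(1) B by simp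
  also have "\<dots> \<le> (\<integral>\<^sup>+S. ennreal \<theta> * emeasure lebesgue S \<partial>count_space M)"
    using density MF by (intro nn_integral_mono) auto
  also have "\<dots> = ennreal \<theta> * (\<integral>\<^sup>+S. emeasure lebesgue S \<partial>count_space M)"
    by (rule nn_integral_cmult) simp
  also have "(\<integral>\<^sup>+S. emeasure lebesgue S \<partial>count_space M) = emeasure lebesgue (\<Union>S\<in>M. S)"
    using emeasure_UN_countable[of M "\<lambda>S. S" lebesgue] M MF(1) by simp
  also have "ennreal \<theta> * emeasure lebesgue (\<Union>S\<in>M. S) \<le> ennreal \<theta> * emeasure lebesgue T"
    using MF T(1) by (intro mult_left_mono emeasure_mono) (auto intro: borel_open)
  finally show ?thesis .
qed

text \<open>Outer regularity makes the open set \<open>T\<close> of \<open>emeasure_le_dyadic_density_open\<close> arbitrarily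
  close to \<open>B\<close> in measure, whence \<open>|B| \<le> \<theta> |B|\<close>.\<close>
lemma null_if_dyadic_density_le:
  fixes B P :: "(real^'n::finite) set"
  assumes P: "P \<in> dyadic_cubes" and BP: "B \<subseteq> P" and B: "B \<in> sets lebesgue"
    and \<theta>: "0 \<le> \<theta>" "\<theta> < 1"
    and density: "\<And>S. S \<in> dyadic_cubes \<Longrightarrow> S \<subseteq> P \<Longrightarrow>
        emeasure lebesgue (S \<inter> B) \<le> ennreal \<theta> * emeasure lebesgue S"
  shows "emeasure lebesgue B = 0"
proof -
  have "emeasure lebesgue B \<le> emeasure lebesgue P" using BP P by (intro emeasure_mono) auto
  then have Bfin: "emeasure lebesgue B = ennreal (measure lebesgue B)"
    using dyadic_cubes_emeasure_finite[OF P] by (intro emeasure_eq_ennreal_measure) auto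
  have "measure lebesgue B \<le> \<theta> * measure lebesgue B + e" if e: "0 < e" for e
  proof -
    obtain T where T: "open T" "B \<subseteq> T" "emeasure lebesgue (T - B) < ennreal e"
      using sets_lebesgue_outer_open[OF B e] by blast
    have "emeasure lebesgue T \<le> emeasure lebesgue B + emeasure lebesgue (T - B)"
      using B T(1) by (intro emeasure_subadditive[THEN order_trans[rotated]] emeasure_mono)
        (auto intro: borel_open)
    also have "\<dots> \<le> ennreal (measure lebesgue B + e)"
      using T(3) e by (simp add: Bfin ennreal_plus add_left_mono less_imp_le del: emeasure_completion)
    finally have T_bound: "emeasure lebesgue T \<le> ennreal (measure lebesgue B + e)" .
    have "ennreal (measure lebesgue B) \<le> ennreal \<theta> * emeasure lebesgue T"
      using emeasure_le_dyadic_density_open[OF P BP B density T(1,2)] by (simp add: Bfin)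
    also have "\<dots> \<le> ennreal \<theta> * ennreal (measure lebesgue B + e)"
      using T_bound by (rule mult_left_mono) simp
    also have "\<dots> = ennreal (\<theta> * (measure lebesgue B + e))"
      using \<theta> e by (simp add: ennreal_mult)
    finally have "measure lebesgue B \<le> \<theta> * (measure lebesgue B + e)"
      using \<theta> e by (simp add: ennreal_le_iff)
    moreover have "\<theta> * e \<le> e" using \<theta> e by (simp add: mult_left_le_one_le)
    ultimately show ?thesis by (simp add: algebra_simps)
  qed
  then have "measure lebesgue B \<le> \<theta> * measure lebesgue B" by (rule field_le_epsilon)
  then have "measure lebesgue B = 0" using \<theta> measure_nonneg[of lebesgue B]
    by (smt (verit) mult_le_cancel_right1)
  then show ?thesis using Bfin by simp
qed

definition quadrant_cube :: "('n::finite \<Rightarrow> bool) \<Rightarrow> nat \<Rightarrow> (real^'n) set" where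
  "quadrant_cube \<sigma> J = dyadic_cube (int J) (\<lambda>i. if \<sigma> i then 0 else -1)"

lemma mem_quadrant_cube:
  "x \<in> quadrant_cube \<sigma> J \<longleftrightarrow>
    (\<forall>i. if \<sigma> i then 0 \<le> x $ i \<and> x $ i < 2 ^ J else - (2 ^ J) \<le> x $ i \<and> x $ i < 0)"
  unfolding quadrant_cube_def dyadic_cube_eq_box[symmetric]
  by (auto simp: powr_realpow split: if_splits)

lemma quadrant_cube_mono:
  assumes "J \<le> J'" shows "quadrant_cube \<sigma> J \<subseteq> quadrant_cube \<sigma> J'"
proof
  have "(2::real) ^ J \<le> 2 ^ J'" using assms by (rule power_increasing) simp
  moreover fix x assume "x \<in> quadrant_cube \<sigma> J"
  ultimately show "x \<in> quadrant_cube \<sigma> J'"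
    unfolding mem_quadrant_cube by (metis (full_types) order.trans order.strict_trans2 neg_le_iff_le)
qed

lemma quadrant_cubes_cover: "\<exists>\<sigma> J. \<forall>J'\<ge>J. x \<in> quadrant_cube \<sigma> J'"
proof -
  obtain J :: nat where J: "(\<Sum>i\<in>UNIV. \<bar>x $ i\<bar>) < 2 ^ J"
    using real_arch_pow[of 2 "\<Sum>i\<in>UNIV. \<bar>x $ i\<bar>"] by auto
  have "- (2 ^ J) < x $ i \<and> x $ i < 2 ^ J" for i
    using J member_le_sum[of i UNIV "\<lambda>i. \<bar>x $ i\<bar>"] by auto
  then have "x \<in> quadrant_cube (\<lambda>i. 0 \<le> x $ i) J"
    unfolding mem_quadrant_cube by (simp add: less_imp_le)
  then show ?thesis using quadrant_cube_mono by blast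
qed

text \<open>The \<open>2^n\<close> increasing sequences of quadrant cubes exhaust \<open>\<real>^n\<close>, so uniform bounds on
  large dyadic cubes pass to the whole space at the cost of a factor \<open>2^n\<close>.\<close>
lemma emeasure_le_by_quadrant_cubes:
  fixes A :: "(real^'n::finite) set"
  assumes A: "A \<in> sets lebesgue"
    and bound: "\<And>\<sigma>. \<exists>J0. \<forall>J\<ge>J0. emeasure lebesgue (A \<inter> quadrant_cube \<sigma> J) \<le> C"
  shows "emeasure lebesgue A \<le> of_nat CARD('n \<Rightarrow> bool) * C"
proof -
  have "\<forall>\<sigma>. \<exists>J0. \<forall>J\<ge>J0. emeasure lebesgue (A \<inter> quadrant_cube \<sigma> J) \<le> C"
    using bound by blast
  then obtain J0 where J0: "\<And>\<sigma> J. J0 \<sigma> \<le> J \<Longrightarrow> emeasure lebesgue (A \<inter> quadrant_cube \<sigma> J) \<le> C"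
    unfolding choice_iff by blast
  define U where "U \<sigma> = (\<Union>J. A \<inter> quadrant_cube \<sigma> (J0 \<sigma> + J))" for \<sigma>
  have U_sets: "U \<sigma> \<in> sets lebesgue" for \<sigma>
    using A by (auto simp: U_def quadrant_cube_def)
  have U_bound: "emeasure lebesgue (U \<sigma>) \<le> C" for \<sigma>
  proof -
    have "incseq (\<lambda>J. A \<inter> quadrant_cube \<sigma> (J0 \<sigma> + J))"
      unfolding incseq_def using quadrant_cube_mono[of "J0 \<sigma> + _" "J0 \<sigma> + _" \<sigma>] by auto
    then have "emeasure lebesgue (U \<sigma>) = (SUP J. emeasure lebesgue (A \<inter> quadrant_cube \<sigma> (J0 \<sigma> + J)))"
      unfolding U_def using A by (intro SUP_emeasure_incseq[symmetric]) (auto simp: quadrant_cube_def)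
    also have "\<dots> \<le> C" by (intro SUP_least J0) simp
    finally show ?thesis .
  qed
  have "A \<subseteq> (\<Union>\<sigma>. U \<sigma>)"
  proof
    fix x assume "x \<in> A"
    moreover obtain \<sigma> J where "\<forall>J'\<ge>J. x \<in> quadrant_cube \<sigma> J'"
      using quadrant_cubes_cover by blast
    ultimately have "x \<in> A \<inter> quadrant_cube \<sigma> (J0 \<sigma> + J)" by simp
    then show "x \<in> (\<Union>\<sigma>. U \<sigma>)" by (auto simp: U_def)
  qed
  then have "emeasure lebesgue A \<le> emeasure lebesgue (\<Union>\<sigma>. U \<sigma>)"
    using U_sets by (intro emeasure_mono) auto
  also have "\<dots> \<le> (\<Sum>\<sigma>\<in>UNIV. emeasure lebesgue (U \<sigma>))"
    using U_sets by (intro emeasure_subadditive_finite) auto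
  also have "\<dots> \<le> (\<Sum>\<sigma>\<in>(UNIV::('n \<Rightarrow> bool) set). C)"
    by (intro sum_mono U_bound)
  finally show ?thesis by simp
qed

lemma measure_quadrant_cube:
  "measure lebesgue (quadrant_cube (\<sigma>::'n::finite \<Rightarrow> bool) J) = (2 ^ J) ^ CARD('n)"
  by (simp add: quadrant_cube_def measure_dyadic_cube powr_realpow)

lemma quadrant_cube_eventually_large:
  "\<exists>J0. \<forall>J\<ge>J0. B < measure lebesgue (quadrant_cube (\<sigma>::'n::finite \<Rightarrow> bool) J)"
proof -
  obtain J0 :: nat where J0: "B < 2 ^ J0" using real_arch_pow[of 2 B] by auto
  have "(2::real) ^ J0 \<le> (2 ^ J) ^ CARD('n)" if "J0 \<le> J" for J
  proof -
    have "(2::real) ^ J0 \<le> 2 ^ J" using that by (rule power_increasing) simp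
    also have "(2::real) ^ J \<le> (2 ^ J) ^ CARD('n)" by (rule self_le_power) auto
    finally show ?thesis .
  qed
  then show ?thesis using J0 by (auto simp: measure_quadrant_cube intro: less_le_trans)
qed

lemma locally_integrable_on_dyadic_cubes:
  assumes "locally_integrable f" "Q \<in> dyadic_cubes"
  shows "set_integrable lebesgue Q f"
proof -
  obtain k m where Q: "Q = dyadic_cube k m" using assms(2) dyadic_cubes_iff by blast
  then obtain a b where "Q \<subseteq> cbox a b" using dyadic_cube_box_bounds(2) by blast
  moreover have "set_integrable lebesgue (cbox a b) f"
    using assms(1) compact_cbox by (auto simp: locally_integrable_def)
  ultimately show ?thesis
    using set_integrable_subset dyadic_cubes_sets[OF assms(2)] by blast
qed

section \<open>Mean oscillation of \<open>|f - c|^\<delta>\<close> on dyadic cubes\<close>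

lemma powr_add_le_add_powr:
  fixes a b d :: real
  assumes "0 \<le> a" "0 \<le> b" "0 < d" "d \<le> 1"
  shows "(a + b) powr d \<le> a powr d + b powr d"
proof (cases "a + b = 0")
  case False
  define s where "s = a + b"
  have s: "s > 0" using False assms by (simp add: s_def)
  have "x / s \<le> (x / s) powr d" if "0 \<le> x" "x \<le> s" for x
  proof -
    have "(x / s) powr 1 \<le> (x / s) powr d" using that s assms by (intro powr_mono') auto
    then show ?thesis using that s by simp
  qed
  then have "s powr d * (a / s + b / s) \<le> s powr d * ((a / s) powr d + (b / s) powr d)"
    using assms by (intro mult_left_mono add_mono) (auto simp: s_def)
  also have "s powr d * (a / s + b / s) = s powr d"
    using s by (simp add: s_def add_divide_distrib[symmetric])
  also have "s powr d * ((a / s) powr d + (b / s) powr d) = a powr d + b powr d"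
    using s by (simp add: powr_divide distrib_left)
  finally show ?thesis by (simp add: s_def)
qed (use assms in simp)

lemma powr_le_one_plus:
  fixes a d :: real
  assumes "0 \<le> a" "0 < d" "d \<le> 1"
  shows "a powr d \<le> 1 + a"
proof (cases "a \<le> 1")
  case True
  then have "a powr d \<le> 1 powr d" using assms by (intro powr_mono2) auto
  then show ?thesis using assms by simp
next
  case False
  then have "a powr d \<le> a powr 1" using assms by (intro powr_mono) auto
  then show ?thesis using False by simp
qed

locale dyadic_oscillation =
  fixes f :: "real^'n::finite \<Rightarrow> real" and \<delta> :: real
  assumes delta_pos: "0 < \<delta>" and delta_lt_1: "\<delta> < 1"
    and f_measurable [measurable]: "f \<in> borel_measurable lebesgue"
    and f_integrable_on_cubes: "\<And>Q. Q \<in> dyadic_cubes \<Longrightarrow> set_integrable lebesgue Q f"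
begin

abbreviation osc :: "(real^'n) set \<Rightarrow> real" where
  "osc Q \<equiv> mean_osc \<delta> f Q"

abbreviation avg :: "(real^'n) set \<Rightarrow> real" where
  "avg Q \<equiv> cube_avg f Q"

lemma level_set_sets [measurable]: "{x. t < \<bar>f x\<bar>} \<in> sets lebesgue"
proof -
  have "{x\<in>space lebesgue. t < \<bar>f x\<bar>} \<in> sets lebesgue" by measurable
  then show ?thesis by simp
qed

text \<open>\<open>deviation Q c = \<integral>\<^sub>Q |f - c|^\<delta>\<close>, as a measure in \<open>Q\<close> so that it is monotone and countably
  additive in \<open>Q\<close>.\<close>
definition deviation :: "(real^'n) set \<Rightarrow> real \<Rightarrow> ennreal" where
  "deviation Q c = emeasure (density lebesgue (\<lambda>x. ennreal (\<bar>f x - c\<bar> powr \<delta>))) Q"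

lemma deviation_eq_nn_integral:
  "Q \<in> sets lebesgue \<Longrightarrow>
    deviation Q c = (\<integral>\<^sup>+x. ennreal (\<bar>f x - c\<bar> powr \<delta>) * indicator Q x \<partial>lebesgue)"
  unfolding deviation_def by (simp add: emeasure_density)

lemma deviation_mono: "Q \<subseteq> Q' \<Longrightarrow> Q' \<in> sets lebesgue \<Longrightarrow> deviation Q c \<le> deviation Q' c"
  unfolding deviation_def by (rule emeasure_mono) auto

lemma deviation_Union:
  assumes "countable I" "I \<subseteq> dyadic_cubes" "disjoint_family_on (\<lambda>Q. Q) I"
  shows "deviation (\<Union>I) c = (\<integral>\<^sup>+Q. deviation Q c \<partial>count_space I)"
proof -
  have "emeasure (density lebesgue (\<lambda>x. ennreal (\<bar>f x - c\<bar> powr \<delta>))) (\<Union>Q\<in>I. Q)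
      = (\<integral>\<^sup>+Q. emeasure (density lebesgue (\<lambda>x. ennreal (\<bar>f x - c\<bar> powr \<delta>))) Q \<partial>count_space I)"
    by (rule emeasure_UN_countable) (use assms dyadic_cubes_sets in auto)
  then show ?thesis by (simp add: deviation_def)
qed

lemma deviation_finite:
  assumes Q: "Q \<in> dyadic_cubes"
  shows "deviation Q c < \<infinity>"
proof -
  have Q_sets [measurable]: "Q \<in> sets lebesgue" using Q by (rule dyadic_cubes_sets)
  have i1: "(\<integral>\<^sup>+x. ennreal (norm (indicator Q x *\<^sub>R f x)) \<partial>lebesgue) < \<infinity>"
    using f_integrable_on_cubes[OF Q] by (simp add: set_integrable_def integrable_iff_bounded)
  have i2: "(\<integral>\<^sup>+x. ennreal (1 + \<bar>c\<bar>) * indicator Q x \<partial>lebesgue) < \<infinity>"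
    using dyadic_cubes_emeasure_finite[OF Q] Q_sets
    by (simp add: nn_integral_cmult_indicator ennreal_mult_less_top)
  have "\<bar>f x - c\<bar> powr \<delta> \<le> \<bar>f x\<bar> + (1 + \<bar>c\<bar>)" for x
    using powr_le_one_plus[of "\<bar>f x - c\<bar>" \<delta>] delta_pos delta_lt_1 by simp
  then have "deviation Q c \<le> (\<integral>\<^sup>+x. ennreal (norm (indicator Q x *\<^sub>R f x))
      + ennreal (1 + \<bar>c\<bar>) * indicator Q x \<partial>lebesgue)"
    unfolding deviation_eq_nn_integral[OF Q_sets]
    by (intro nn_integral_mono) (auto simp: indicator_def ennreal_plus[symmetric] ennreal_leI
        simp del: ennreal_plus)
  also have "\<dots> = (\<integral>\<^sup>+x. ennreal (norm (indicator Q x *\<^sub>R f x)) \<partial>lebesgue)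
      + (\<integral>\<^sup>+x. ennreal (1 + \<bar>c\<bar>) * indicator Q x \<partial>lebesgue)"
    by (rule nn_integral_add) measurable
  also have "\<dots> < \<infinity>" using i1 i2 by simp
  finally show ?thesis .
qed

lemma mean_osc_eq_deviation:
  assumes Q: "Q \<in> dyadic_cubes"
  shows "osc Q = (enn2real (deviation Q (avg Q)) / measure lebesgue Q) powr (1 / \<delta>)"
proof -
  have Q_sets: "Q \<in> sets lebesgue" using Q by (rule dyadic_cubes_sets)
  have "(LINT x:Q|lebesgue. \<bar>f x - avg Q\<bar> powr \<delta>)
      = enn2real (\<integral>\<^sup>+x. ennreal (indicator Q x *\<^sub>R \<bar>f x - avg Q\<bar> powr \<delta>) \<partial>lebesgue)"
    unfolding set_lebesgue_integral_def by (rule integral_eq_nn_integral) (use Q_sets in auto)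
  also have "(\<integral>\<^sup>+x. ennreal (indicator Q x *\<^sub>R \<bar>f x - avg Q\<bar> powr \<delta>) \<partial>lebesgue) = deviation Q (avg Q)"
    unfolding deviation_eq_nn_integral[OF Q_sets] by (intro nn_integral_cong) (auto simp: indicator_def)
  finally show ?thesis unfolding mean_osc_def by simp
qed

lemma deviation_le_of_mean_osc_le:
  assumes Q: "Q \<in> dyadic_cubes" and le: "osc Q \<le> \<eta>"
  shows "deviation Q (avg Q) \<le> ennreal (\<eta> powr \<delta> * measure lebesgue Q)"
proof -
  define j where "j = enn2real (deviation Q (avg Q))"
  have m: "measure lebesgue Q > 0" using dyadic_cubes_measure_pos[OF Q] .
  have "j / measure lebesgue Q = osc Q powr \<delta>"
    using mean_osc_eq_deviation[OF Q] delta_pos m by (simp add: powr_powr j_def)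
  also have "\<dots> \<le> \<eta> powr \<delta>"
    using le delta_pos mean_osc_eq_deviation[OF Q] by (intro powr_mono2) auto
  finally have "j \<le> \<eta> powr \<delta> * measure lebesgue Q" using m by (simp add: divide_le_eq)
  moreover have "deviation Q (avg Q) = ennreal j"
    using deviation_finite[OF Q] by (simp add: j_def ennreal_enn2real less_top)
  ultimately show ?thesis by (simp add: ennreal_leI)
qed

lemma chebyshev_deviation:
  assumes Q: "Q \<in> sets lebesgue" and t: "0 < t"
  shows "ennreal (t powr \<delta>) * emeasure lebesgue (Q \<inter> {x. t < \<bar>f x - c\<bar>}) \<le> deviation Q c"
proof -
  have "Q \<inter> {x. t < \<bar>f x - c\<bar>} \<in> sets lebesgue" using Q by measurable
  then have "ennreal (t powr \<delta>) * emeasure lebesgue (Q \<inter> {x. t < \<bar>f x - c\<bar>})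
      = (\<integral>\<^sup>+x. ennreal (t powr \<delta>) * indicator (Q \<inter> {x. t < \<bar>f x - c\<bar>}) x \<partial>lebesgue)"
    by (simp add: nn_integral_cmult_indicator)
  also have "\<dots> \<le> deviation Q c"
    unfolding deviation_eq_nn_integral[OF Q]
    using t delta_pos by (intro nn_integral_mono) (auto simp: indicator_def intro: ennreal_leI powr_mono2)
  finally show ?thesis .
qed

lemma deviation_triangle:
  assumes Q: "Q \<in> sets lebesgue"
  shows "ennreal (\<bar>c1 - c2\<bar> powr \<delta>) * emeasure lebesgue Q \<le> deviation Q c1 + deviation Q c2"
proof -
  have "\<bar>c1 - c2\<bar> powr \<delta> \<le> \<bar>f x - c1\<bar> powr \<delta> + \<bar>f x - c2\<bar> powr \<delta>" for x
  proof -
    have "\<bar>c1 - c2\<bar> powr \<delta> \<le> (\<bar>f x - c1\<bar> + \<bar>f x - c2\<bar>) powr \<delta>"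
      using delta_pos by (intro powr_mono2) auto
    also have "\<dots> \<le> \<bar>f x - c1\<bar> powr \<delta> + \<bar>f x - c2\<bar> powr \<delta>"
      using delta_pos delta_lt_1 by (intro powr_add_le_add_powr) auto
    finally show ?thesis .
  qed
  then have "(\<integral>\<^sup>+x. ennreal (\<bar>c1 - c2\<bar> powr \<delta>) * indicator Q x \<partial>lebesgue)
      \<le> (\<integral>\<^sup>+x. ennreal (\<bar>f x - c1\<bar> powr \<delta>) * indicator Q x
          + ennreal (\<bar>f x - c2\<bar> powr \<delta>) * indicator Q x \<partial>lebesgue)"
    by (intro nn_integral_mono) (auto simp: indicator_def ennreal_plus[symmetric] ennreal_leI
        simp del: ennreal_plus)
  also have "\<dots> = deviation Q c1 + deviation Q c2"
    unfolding deviation_eq_nn_integral[OF Q] by (rule nn_integral_add) (use Q in measurable)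
  finally show ?thesis using Q by (simp add: nn_integral_cmult_indicator)
qed

lemma powr_dist_le_of_deviation_le:
  assumes Q: "Q \<in> dyadic_cubes" and "0 \<le> a" "0 \<le> b"
    and "deviation Q c1 \<le> ennreal (a * measure lebesgue Q)"
    and "deviation Q c2 \<le> ennreal (b * measure lebesgue Q)"
  shows "\<bar>c1 - c2\<bar> powr \<delta> \<le> a + b"
proof -
  define m where "m = measure lebesgue Q"
  have m: "m > 0" using dyadic_cubes_measure_pos[OF Q] by (simp add: m_def)
  have "ennreal (\<bar>c1 - c2\<bar> powr \<delta> * m) = ennreal (\<bar>c1 - c2\<bar> powr \<delta>) * emeasure lebesgue Q"
    using emeasure_dyadic_cubes[OF Q] m by (simp add: m_def ennreal_mult del: emeasure_completion)
  also have "\<dots> \<le> deviation Q c1 + deviation Q c2" by (rule deviation_triangle[OF dyadic_cubes_sets[OF Q]])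
  also have "\<dots> \<le> ennreal (a * m) + ennreal (b * m)" using assms by (intro add_mono) (simp_all add: m_def)
  also have "\<dots> = ennreal ((a + b) * m)" using assms m by (simp add: ennreal_plus distrib_right)
  finally have "\<bar>c1 - c2\<bar> powr \<delta> * m \<le> (a + b) * m" using assms m by (simp add: ennreal_le_iff)
  then show ?thesis using m by simp
qed

definition sharp_level :: "real \<Rightarrow> (real^'n) set" where
  "sharp_level \<eta> = {x. ennreal \<eta> < sharp_max_dyadic \<delta> f x}"

lemma sharp_level_eq:
  assumes "0 \<le> \<eta>"
  shows "sharp_level \<eta> = \<Union>{Q\<in>dyadic_cubes. \<eta> < osc Q}"
  using assms by (auto simp: sharp_level_def sharp_max_dyadic_def less_SUP_iff ennreal_less_iff)

lemma sharp_level_sets [measurable]: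
  assumes "0 \<le> \<eta>"
  shows "sharp_level \<eta> \<in> sets lebesgue"
proof -
  have "countable {Q\<in>dyadic_cubes. \<eta> < osc Q}"
    by (rule countable_subset[OF _ countable_dyadic_cubes]) auto
  then show ?thesis unfolding sharp_level_eq[OF assms]
    by (rule sets.countable_Union) (auto intro: dyadic_cubes_sets)
qed

lemma mean_osc_le_outside_sharp_level:
  "0 \<le> \<eta> \<Longrightarrow> x \<notin> sharp_level \<eta> \<Longrightarrow> Q \<in> dyadic_cubes \<Longrightarrow> x \<in> Q \<Longrightarrow> osc Q \<le> \<eta>"
  using sharp_level_eq[of \<eta>] by (auto simp: not_less)

lemma dyadic_cube_subset_sharp_level:
  "0 \<le> \<eta> \<Longrightarrow> Q \<in> dyadic_cubes \<Longrightarrow> \<eta> < osc Q \<Longrightarrow> Q \<subseteq> sharp_level \<eta>"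
  using sharp_level_eq[of \<eta>] by blast

text \<open>Averages of nested cubes of small oscillation differ by at most \<open>drift_const * \<eta>\<close>; the
  constant absorbs the factor \<open>2^n\<close> between the volumes of a cube and its parent.\<close>
definition drift_const :: real where
  "drift_const = (2 ^ (CARD('n) + 1) + 1) powr (1 / \<delta>)"

lemma drift_const_base_pos: "(0::real) < 2 ^ (CARD('n) + 1) + 1"
  by (metis add_pos_pos zero_less_one zero_less_numeral zero_less_power)

lemma drift_const_pos: "0 < drift_const"
  using drift_const_base_pos by (simp add: drift_const_def)

lemma abs_avg_diff_le_drift_const:
  assumes S: "S \<in> dyadic_cubes" and osc: "osc S \<le> \<eta>" and \<eta>: "0 < \<eta>"
    and a: "0 \<le> a" "a \<le> 2 ^ (CARD('n) + 1)"
    and dev: "deviation S c \<le> ennreal (a * \<eta> powr \<delta> * measure lebesgue S)"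
  shows "\<bar>avg S - c\<bar> \<le> drift_const * \<eta>"
proof -
  have "\<bar>avg S - c\<bar> powr \<delta> \<le> \<eta> powr \<delta> + a * \<eta> powr \<delta>"
    using deviation_le_of_mean_osc_le[OF S osc] dev a
    by (intro powr_dist_le_of_deviation_le[OF S]) (auto simp: mult.assoc)
  also have "\<dots> \<le> (2 ^ (CARD('n) + 1) + 1) * \<eta> powr \<delta>"
    using a \<eta> by (simp add: algebra_simps mult_right_mono)
  also have "\<dots> = (drift_const * \<eta>) powr \<delta>"
    using \<eta> delta_pos drift_const_base_pos by (simp add: drift_const_def powr_mult powr_powr)
  finally show ?thesis
    using delta_pos drift_const_pos \<eta> by (meson not_le powr_less_mono2 abs_ge_zero less_imp_le
        mult_pos_pos)
qed

lemma abs_avg_diff_parent_le: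
  assumes R: "R \<in> dyadic_cubes" and \<eta>: "0 < \<eta>"
    and "osc R \<le> \<eta>" "osc (dyadic_parent R) \<le> \<eta>"
  shows "\<bar>avg R - avg (dyadic_parent R)\<bar> \<le> drift_const * \<eta>"
proof (rule abs_avg_diff_le_drift_const[OF R \<open>osc R \<le> \<eta>\<close> \<eta>])
  have "deviation R (avg (dyadic_parent R)) \<le> deviation (dyadic_parent R) (avg (dyadic_parent R))"
    using subset_dyadic_parent[OF R] dyadic_parent_in_dyadic_cubes[OF R]
    by (intro deviation_mono) (auto intro: dyadic_cubes_sets)
  also have "\<dots> \<le> ennreal (\<eta> powr \<delta> * measure lebesgue (dyadic_parent R))"
    using deviation_le_of_mean_osc_le dyadic_parent_in_dyadic_cubes[OF R] assms(4) by blast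
  finally show "deviation R (avg (dyadic_parent R))
      \<le> ennreal (2 ^ CARD('n) * \<eta> powr \<delta> * measure lebesgue R)"
    by (simp add: measure_dyadic_parent[OF R] algebra_simps)
qed auto

text \<open>If \<open>|f| > s\<close> on at most half of a cube of small oscillation, then \<open>|f - avg C| > s\<close> on
  the other half unless \<open>|avg C| \<le> 2s\<close>, and Chebyshev excludes the first alternative.\<close>
lemma abs_avg_le_of_small_level_set:
  assumes C: "C \<in> dyadic_cubes" and osc: "osc C \<le> \<eta>" and s: "0 < s"
    and small: "2 * \<eta> powr \<delta> < s powr \<delta>"
    and half: "emeasure lebesgue (C \<inter> {x. s < \<bar>f x\<bar>}) \<le> ennreal (measure lebesgue C / 2)"
  shows "\<bar>avg C\<bar> \<le> 2 * s"
proof (rule ccontr)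
  assume big: "\<not> \<bar>avg C\<bar> \<le> 2 * s"
  define m where "m = measure lebesgue C"
  have m: "0 < m" using dyadic_cubes_measure_pos[OF C] by (simp add: m_def)
  have C_fin: "C \<in> fmeasurable lebesgue" using dyadic_cubes_fmeasurable[OF C] .
  have A: "C \<inter> {x. s < \<bar>f x\<bar>} \<in> fmeasurable lebesgue"
    and B: "C \<inter> {x. s < \<bar>f x - avg C\<bar>} \<in> fmeasurable lebesgue"
    by (rule fmeasurableI2[OF C_fin]; use C in measurable)+
  have "m - measure lebesgue (C \<inter> {x. s < \<bar>f x\<bar>}) = measure lebesgue (C - (C \<inter> {x. s < \<bar>f x\<bar>}))"
    unfolding m_def using A C_fin by (intro measure_Diff[symmetric]) (auto simp: fmeasurable_def)
  also have "\<dots> \<le> measure lebesgue (C \<inter> {x. s < \<bar>f x - avg C\<bar>})"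
    using big B A C_fin by (intro measure_mono_fmeasurable) auto
  finally have "m / 2 \<le> measure lebesgue (C \<inter> {x. s < \<bar>f x - avg C\<bar>})"
    using half A by (simp add: m_def emeasure_eq_measure2 del: emeasure_completion)
  then have "s powr \<delta> * (m / 2) \<le> s powr \<delta> * measure lebesgue (C \<inter> {x. s < \<bar>f x - avg C\<bar>})"
    by (rule mult_left_mono) simp
  then have "ennreal (s powr \<delta> * (m / 2))
      \<le> ennreal (s powr \<delta>) * emeasure lebesgue (C \<inter> {x. s < \<bar>f x - avg C\<bar>})"
    using B by (simp add: emeasure_eq_measure2 ennreal_mult[symmetric] ennreal_leI
        del: emeasure_completion)
  also have "\<dots> \<le> deviation C (avg C)"
    using C s by (intro chebyshev_deviation dyadic_cubes_sets)
  also have "\<dots> \<le> ennreal (\<eta> powr \<delta> * m)"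
    using deviation_le_of_mean_osc_le[OF C osc] by (simp add: m_def)
  finally have "s powr \<delta> * (m / 2) \<le> \<eta> powr \<delta> * m"
    using m by (simp add: ennreal_le_iff)
  then show False using small m by (simp add: field_simps)
qed

end

section \<open>A John--Nirenberg inequality below a cube of small oscillation\<close>

text \<open>Inside a dyadic cube \<open>P\<close> with \<open>osc P \<le> \<eta>\<close>, the cubes of oscillation \<open>> \<eta>\<close> are bad. On the
  maximal bad cubes \<open>f\<close> is replaced by its average over the parent cube, which is good;
  \<open>jn_exceptional Q t\<close> is the set where this modified function deviates from \<open>avg Q\<close> by more
  than \<open>t\<close>.\<close>
locale john_nirenberg_cube = dyadic_oscillation f \<delta> for f :: "real^'n::finite \<Rightarrow> real" and \<delta> +
  fixes P :: "(real^'n) set" and \<eta> :: real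
  assumes P: "P \<in> dyadic_cubes" and eta_pos: "0 < \<eta>" and osc_P: "osc P \<le> \<eta>"
begin

definition bad_cubes :: "(real^'n) set set" where
  "bad_cubes = {R\<in>dyadic_cubes. R \<subseteq> P \<and> \<eta> < osc R}"

definition good_points :: "(real^'n) set" where
  "good_points = P - \<Union>bad_cubes"

definition good_cube :: "(real^'n) set \<Rightarrow> bool" where
  "good_cube Q \<longleftrightarrow> Q \<in> dyadic_cubes \<and> Q \<subseteq> P \<and>
    (\<forall>Q'\<in>dyadic_cubes. Q \<subseteq> Q' \<longrightarrow> Q' \<subseteq> P \<longrightarrow> osc Q' \<le> \<eta>)"

definition jn_exceptional :: "(real^'n) set \<Rightarrow> real \<Rightarrow> (real^'n) set" where
  "jn_exceptional Q t = {x\<in>good_points \<inter> Q. t < \<bar>f x - avg Q\<bar>}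
    \<union> \<Union>{R\<in>maximal_cubes bad_cubes. R \<subseteq> Q \<and> t < \<bar>avg (dyadic_parent R) - avg Q\<bar>}"

definition jn_base :: real where
  "jn_base = 4 powr (1 / \<delta>) * \<eta>"

lemma bad_cubes_subset: "bad_cubes \<subseteq> dyadic_cubes"
  by (auto simp: bad_cubes_def)

lemma countable_maximal_bad: "countable (maximal_cubes bad_cubes)"
  using countable_maximal_cubes[OF bad_cubes_subset] .

lemma good_points_sets [measurable]: "good_points \<in> sets lebesgue"
proof -
  have "\<Union>bad_cubes \<in> sets lebesgue"
    using countable_subset[OF bad_cubes_subset countable_dyadic_cubes] bad_cubes_subset
    by (intro sets.countable_Union) (auto intro: dyadic_cubes_sets)
  then show ?thesis unfolding good_points_def using dyadic_cubes_sets[OF P] by auto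
qed

lemma good_cube_mean_osc_le: "good_cube Q \<Longrightarrow> osc Q \<le> \<eta>"
  unfolding good_cube_def by auto

lemma good_cube_P: "good_cube P"
  unfolding good_cube_def using P osc_P by auto

lemma good_cube_of_good_point:
  "x \<in> good_points \<Longrightarrow> S \<in> dyadic_cubes \<Longrightarrow> x \<in> S \<Longrightarrow> S \<subseteq> P \<Longrightarrow> good_cube S"
  unfolding good_cube_def good_points_def bad_cubes_def by (auto simp: not_less)

lemma good_cube_parent:
  assumes "good_cube S" "dyadic_parent S \<subseteq> P"
  shows "good_cube (dyadic_parent S)"
  using assms subset_dyadic_parent dyadic_parent_in_dyadic_cubes
  unfolding good_cube_def by (meson order_trans)

lemma
  assumes R: "R \<in> maximal_cubes bad_cubes"
  shows maximal_bad_in_dyadic_cubes: "R \<in> dyadic_cubes"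
    and maximal_bad_subset: "R \<subseteq> P"
    and maximal_bad_mean_osc: "\<eta> < osc R"
    and good_cube_parent_maximal_bad: "good_cube (dyadic_parent R)"
proof -
  have RB: "R \<in> bad_cubes" using R maximal_cubes_subset by blast
  show Rd: "R \<in> dyadic_cubes" and RP: "R \<subseteq> P" and osc_R: "\<eta> < osc R"
    using RB by (auto simp: bad_cubes_def)
  have "R \<subset> P" using RP osc_R osc_P by auto
  then have pP: "dyadic_parent R \<subseteq> P" using dyadic_parent_subset[OF Rd P] by simp
  have "osc Q' \<le> \<eta>" if "Q' \<in> dyadic_cubes" "dyadic_parent R \<subseteq> Q'" "Q' \<subseteq> P" for Q'
  proof (rule ccontr)
    assume "\<not> osc Q' \<le> \<eta>"
    then have "Q' \<in> bad_cubes" using that by (auto simp: bad_cubes_def)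
    moreover have "R \<subseteq> Q'" using subset_dyadic_parent[OF Rd] that by auto
    ultimately have "Q' = R" using R by (auto simp: maximal_cubes_def)
    then show False using subset_dyadic_parent[OF Rd] dyadic_parent_neq[OF Rd] that by auto
  qed
  then show "good_cube (dyadic_parent R)"
    using pP dyadic_parent_in_dyadic_cubes[OF Rd] by (auto simp: good_cube_def)
qed

lemma jn_exceptional_subset: "jn_exceptional Q t \<subseteq> Q"
  unfolding jn_exceptional_def by auto

lemma jn_exceptional_sets [measurable]:
  assumes Q: "Q \<in> dyadic_cubes"
  shows "jn_exceptional Q t \<in> sets lebesgue"
proof -
  have [measurable]: "Q \<in> sets lebesgue" using dyadic_cubes_sets[OF Q] .
  have "countable {R\<in>maximal_cubes bad_cubes. R \<subseteq> Q \<and> t < \<bar>avg (dyadic_parent R) - avg Q\<bar>}"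
    by (rule countable_subset[OF _ countable_maximal_bad]) auto
  then have "\<Union>{R\<in>maximal_cubes bad_cubes. R \<subseteq> Q \<and> t < \<bar>avg (dyadic_parent R) - avg Q\<bar>} \<in> sets lebesgue"
    by (rule sets.countable_Union) (auto intro: maximal_bad_in_dyadic_cubes dyadic_cubes_sets)
  moreover have "{x\<in>good_points \<inter> Q. t < \<bar>f x - avg Q\<bar>} \<in> sets lebesgue" by measurable
  ultimately show ?thesis unfolding jn_exceptional_def by auto
qed

end

context john_nirenberg_cube
begin

text \<open>Stopping time below a good cube \<open>Q\<close>: stop at the maximal good subcubes on which the
  deviation from \<open>avg Q\<close> is large.\<close>
definition stopping_cubes :: "(real^'n) set \<Rightarrow> (real^'n) set set" where
  "stopping_cubes Q = {S\<in>dyadic_cubes. good_cube S \<and> S \<subseteq> Q \<and>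
     ennreal (2 * \<eta> powr \<delta> * measure lebesgue S) < deviation S (avg Q)}"

definition unstopped_far :: "(real^'n) set \<Rightarrow> (real^'n) set" where
  "unstopped_far Q = {x\<in>good_points \<inter> Q. x \<notin> \<Union>(maximal_cubes (stopping_cubes Q))
     \<and> jn_base < \<bar>f x - avg Q\<bar>}"

lemma stopping_cubes_subset: "stopping_cubes Q \<subseteq> dyadic_cubes"
  by (auto simp: stopping_cubes_def)

lemma maximal_stopping_exists:
  assumes "Q \<in> dyadic_cubes" "S \<in> stopping_cubes Q"
  shows "\<exists>T\<in>maximal_cubes (stopping_cubes Q). S \<subseteq> T"
  using assms by (intro maximal_cubes_exists[OF stopping_cubes_subset, of _ _ "dyadic_level Q"])
    (auto simp: stopping_cubes_def intro: dyadic_level_mono)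

lemma maximal_stopping:
  assumes "S \<in> maximal_cubes (stopping_cubes Q)"
  shows "S \<in> dyadic_cubes" "good_cube S" "S \<subseteq> Q"
    "ennreal (2 * \<eta> powr \<delta> * measure lebesgue S) < deviation S (avg Q)"
  using assms maximal_cubes_subset by (auto simp: stopping_cubes_def)

lemma maximal_stopping_family:
  "countable (maximal_cubes (stopping_cubes Q))"
  "disjoint_family_on (\<lambda>S. S) (maximal_cubes (stopping_cubes Q))"
  "maximal_cubes (stopping_cubes Q) \<subseteq> dyadic_cubes"
  using countable_maximal_cubes[OF stopping_cubes_subset] maximal_cubes_disjoint[OF stopping_cubes_subset]
    maximal_stopping(1) by auto

lemma abs_avg_diff_le_of_not_stopping:
  assumes S: "good_cube S" "S \<subseteq> Q" "S \<notin> stopping_cubes Q"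
  shows "\<bar>avg S - avg Q\<bar> \<le> drift_const * \<eta>"
proof -
  have Sd: "S \<in> dyadic_cubes" using S by (simp add: good_cube_def)
  have "deviation S (avg Q) \<le> ennreal (2 * \<eta> powr \<delta> * measure lebesgue S)"
    using S Sd by (auto simp: stopping_cubes_def not_less)
  then show ?thesis
    using eta_pos by (intro abs_avg_diff_le_drift_const[OF Sd good_cube_mean_osc_le[OF S(1)]]) auto
qed

lemma abs_avg_diff_le_of_maximal_stopping:
  assumes Q: "good_cube Q" and S: "S \<in> maximal_cubes (stopping_cubes Q)"
  shows "\<bar>avg S - avg Q\<bar> \<le> drift_const * \<eta>"
proof -
  note S_props = maximal_stopping[OF S]
  have Qd: "Q \<in> dyadic_cubes" using Q by (simp add: good_cube_def)
  have "S \<noteq> Q"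
  proof
    assume "S = Q"
    then have "ennreal (2 * \<eta> powr \<delta> * measure lebesgue Q) < ennreal (\<eta> powr \<delta> * measure lebesgue Q)"
      using S_props(4) deviation_le_of_mean_osc_le[OF Qd good_cube_mean_osc_le[OF Q]] by simp
    then show False using eta_pos dyadic_cubes_measure_pos[OF Qd] by (simp add: ennreal_less_iff)
  qed
  then have parent_Q: "dyadic_parent S \<subseteq> Q"
    using dyadic_parent_subset[OF S_props(1) Qd] S_props(3) by auto
  have "dyadic_parent S \<notin> stopping_cubes Q"
    using S subset_dyadic_parent[OF S_props(1)] dyadic_parent_neq[OF S_props(1)]
    by (auto simp: maximal_cubes_def)
  then have "deviation (dyadic_parent S) (avg Q)
      \<le> ennreal (2 * \<eta> powr \<delta> * measure lebesgue (dyadic_parent S))"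
    using parent_Q Q good_cube_parent[OF S_props(2)] dyadic_parent_in_dyadic_cubes[OF S_props(1)]
    by (auto simp: stopping_cubes_def good_cube_def not_less)
  moreover have "deviation S (avg Q) \<le> deviation (dyadic_parent S) (avg Q)"
    using subset_dyadic_parent dyadic_parent_in_dyadic_cubes S_props(1)
    by (intro deviation_mono) (auto intro: dyadic_cubes_sets)
  ultimately have "deviation S (avg Q)
      \<le> ennreal (2 ^ (CARD('n) + 1) * \<eta> powr \<delta> * measure lebesgue S)"
    by (simp add: measure_dyadic_parent[OF S_props(1)] algebra_simps)
  then show ?thesis
    using eta_pos S_props(1,2)
    by (intro abs_avg_diff_le_drift_const[OF _ good_cube_mean_osc_le]) auto
qed

lemma emeasure_Union_maximal_stopping:
  assumes Q: "good_cube Q"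
  shows "emeasure lebesgue (\<Union>(maximal_cubes (stopping_cubes Q))) \<le> ennreal (measure lebesgue Q / 2)"
proof -
  define M where "M = maximal_cubes (stopping_cubes Q)"
  have Qd: "Q \<in> dyadic_cubes" using Q by (simp add: good_cube_def)
  note M = maximal_stopping_family[of Q, folded M_def]
  have MQ: "\<Union>M \<subseteq> Q" using maximal_stopping(3) by (auto simp: M_def)
  have "ennreal (2 * \<eta> powr \<delta>) * emeasure lebesgue (\<Union>M)
      = (\<integral>\<^sup>+S. ennreal (2 * \<eta> powr \<delta>) * emeasure lebesgue S \<partial>count_space M)"
    by (simp add: emeasure_Union_dyadic_cubes[OF M] nn_integral_cmult)
  also have "\<dots> \<le> (\<integral>\<^sup>+S. deviation S (avg Q) \<partial>count_space M)"
    using maximal_stopping(1,4) eta_pos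
    by (intro nn_integral_mono) (auto simp: M_def emeasure_dyadic_cubes ennreal_mult less_imp_le
        simp del: emeasure_completion)
  also have "\<dots> = deviation (\<Union>M) (avg Q)" using deviation_Union[OF M(1,3,2)] ..
  also have "\<dots> \<le> deviation Q (avg Q)" using MQ Qd by (intro deviation_mono dyadic_cubes_sets)
  also have "\<dots> \<le> ennreal (\<eta> powr \<delta> * measure lebesgue Q)"
    using deviation_le_of_mean_osc_le[OF Qd good_cube_mean_osc_le[OF Q]] .
  also have "\<dots> = ennreal (2 * \<eta> powr \<delta>) * ennreal (measure lebesgue Q / 2)"
    using eta_pos by (simp add: ennreal_mult[symmetric])
  finally show ?thesis
    using eta_pos by (simp add: M_def ennreal_mult_le_mult_iff)
qed

end

context john_nirenberg_cube
begin

lemma unstopped_far_sets [measurable]: "Q \<in> dyadic_cubes \<Longrightarrow> unstopped_far Q \<in> sets lebesgue"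
proof -
  assume Q: "Q \<in> dyadic_cubes"
  have "\<Union>(maximal_cubes (stopping_cubes Q)) \<in> sets lebesgue"
    using maximal_stopping_family[of Q]
    by (intro sets.countable_Union) (auto intro: dyadic_cubes_sets)
  then show ?thesis unfolding unstopped_far_def using Q by measurable
qed

text \<open>Every dyadic subcube meeting \<open>unstopped_far Q\<close> is good and not stopped, so Chebyshev
  bounds the relative density of \<open>unstopped_far Q\<close> in it by \<open>1/2\<close>.\<close>
lemma null_unstopped_far:
  assumes Q: "good_cube Q"
  shows "emeasure lebesgue (unstopped_far Q) = 0"
proof -
  have Qd: "Q \<in> dyadic_cubes" and QP: "Q \<subseteq> P" using Q by (auto simp: good_cube_def)
  have "emeasure lebesgue (S \<inter> unstopped_far Q) \<le> ennreal (1/2) * emeasure lebesgue S"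
    if S: "S \<in> dyadic_cubes" "S \<subseteq> Q" for S
  proof (cases "S \<inter> unstopped_far Q = {}")
    case False
    then obtain x where x: "x \<in> S" "x \<in> unstopped_far Q" by blast
    have "good_cube S"
      using good_cube_of_good_point[of x S] x S QP by (auto simp: unstopped_far_def)
    moreover have "S \<notin> stopping_cubes Q"
      using maximal_stopping_exists[OF Qd] x by (auto simp: unstopped_far_def)
    ultimately have dev: "deviation S (avg Q) \<le> ennreal (2 * \<eta> powr \<delta> * measure lebesgue S)"
      using S by (auto simp: stopping_cubes_def not_less)
    have jn_base: "0 < jn_base" "jn_base powr \<delta> = 4 * \<eta> powr \<delta>"
      using delta_pos eta_pos by (simp_all add: jn_base_def powr_mult powr_powr)
    have "S \<inter> {x. jn_base < \<bar>f x - avg Q\<bar>} \<in> sets lebesgue" using S by measurable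
    then have "emeasure lebesgue (S \<inter> unstopped_far Q)
        \<le> emeasure lebesgue (S \<inter> {x. jn_base < \<bar>f x - avg Q\<bar>})"
      by (rule emeasure_mono[rotated]) (auto simp: unstopped_far_def)
    then have "ennreal (4 * \<eta> powr \<delta>) * emeasure lebesgue (S \<inter> unstopped_far Q)
        \<le> ennreal (jn_base powr \<delta>) * emeasure lebesgue (S \<inter> {x. jn_base < \<bar>f x - avg Q\<bar>})"
      unfolding jn_base(2) by (rule mult_left_mono) simp
    also have "\<dots> \<le> deviation S (avg Q)" using S jn_base by (intro chebyshev_deviation) auto
    also have "\<dots> \<le> ennreal (4 * \<eta> powr \<delta>) * ennreal (measure lebesgue S / 2)"
      using dev by (simp add: ennreal_mult'[symmetric] mult.assoc)
    also have "ennreal (measure lebesgue S / 2) = ennreal (1/2) * emeasure lebesgue S"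
      using ennreal_mult'[of "1/2" "measure lebesgue S"] emeasure_dyadic_cubes[OF S(1)]
      by (simp del: emeasure_completion)
    finally show ?thesis using eta_pos by (simp add: ennreal_mult_le_mult_iff)
  qed simp
  then show ?thesis
    using Qd unstopped_far_sets[OF Qd]
    by (intro null_if_dyadic_density_le[of Q _ "1/2"]) (auto simp: unstopped_far_def)
qed

lemma jn_exceptional_subset_stopping:
  assumes Q: "good_cube Q" and t: "jn_base \<le> t"
  shows "jn_exceptional Q (t + drift_const * \<eta>)
    \<subseteq> unstopped_far Q \<union> (\<Union>S\<in>maximal_cubes (stopping_cubes Q). jn_exceptional S t)"
proof
  have Qd: "Q \<in> dyadic_cubes" and osc_Q: "osc Q \<le> \<eta>" using Q by (auto simp: good_cube_def)
  have drift: "0 \<le> drift_const * \<eta>" "0 < jn_base"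
    using drift_const_pos eta_pos delta_pos by (simp_all add: jn_base_def)
  note near = abs_avg_diff_le_of_maximal_stopping[OF Q]
  fix x assume x: "x \<in> jn_exceptional Q (t + drift_const * \<eta>)"
  show "x \<in> unstopped_far Q \<union> (\<Union>S\<in>maximal_cubes (stopping_cubes Q). jn_exceptional S t)"
  proof (cases "x \<in> good_points \<inter> Q \<and> t + drift_const * \<eta> < \<bar>f x - avg Q\<bar>")
    case True
    then have x_good: "x \<in> good_points \<inter> Q" and far: "t + drift_const * \<eta> < \<bar>f x - avg Q\<bar>"
      by auto
    show ?thesis
    proof (cases "\<exists>S\<in>maximal_cubes (stopping_cubes Q). x \<in> S")
      case True
      then obtain S where S: "S \<in> maximal_cubes (stopping_cubes Q)" "x \<in> S" by blast
      have "t < \<bar>f x - avg S\<bar>" using near[OF S(1)] far by linarith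
      then show ?thesis using S x_good by (auto simp: jn_exceptional_def)
    next
      case False
      then show ?thesis using x_good far t drift by (auto simp: unstopped_far_def)
    qed
  next
    case False
    then obtain R where R: "R \<in> maximal_cubes bad_cubes" "R \<subseteq> Q" "x \<in> R"
        "t + drift_const * \<eta> < \<bar>avg (dyadic_parent R) - avg Q\<bar>"
      using x unfolding jn_exceptional_def by blast
    note R_props = maximal_bad_in_dyadic_cubes[OF R(1)] maximal_bad_mean_osc[OF R(1)]
      good_cube_parent_maximal_bad[OF R(1)]
    have "R \<noteq> Q" using R_props(2) osc_Q by auto
    then have parent_Q: "dyadic_parent R \<subseteq> Q"
      using R(2) by (intro dyadic_parent_subset[OF R_props(1) Qd]) auto
    have "dyadic_parent R \<in> stopping_cubes Q"
    proof (rule ccontr)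
      assume "dyadic_parent R \<notin> stopping_cubes Q"
      from abs_avg_diff_le_of_not_stopping[OF R_props(3) parent_Q this] R(4) t drift
      show False by linarith
    qed
    then obtain S where S: "S \<in> maximal_cubes (stopping_cubes Q)" "dyadic_parent R \<subseteq> S"
      using maximal_stopping_exists[OF Qd] by blast
    have "t < \<bar>avg (dyadic_parent R) - avg S\<bar>" using near[OF S(1)] R(4) by linarith
    then have "x \<in> jn_exceptional S t"
      using S R subset_dyadic_parent[OF R_props(1)] unfolding jn_exceptional_def by blast
    then show ?thesis using S(1) by blast
  qed
qed

lemma jn_step:
  assumes IH: "\<And>Q. good_cube Q \<Longrightarrow> emeasure lebesgue (jn_exceptional Q t) \<le> ennreal r * emeasure lebesgue Q"
    and t: "jn_base \<le> t" and r: "0 \<le> r" and Q: "good_cube Q"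
  shows "emeasure lebesgue (jn_exceptional Q (t + drift_const * \<eta>)) \<le> ennreal (r / 2) * emeasure lebesgue Q"
proof -
  define M where "M = maximal_cubes (stopping_cubes Q)"
  note M = maximal_stopping_family[of Q, folded M_def]
  have Qd: "Q \<in> dyadic_cubes" using Q by (simp add: good_cube_def)
  have exc_sets: "\<And>S. S \<in> M \<Longrightarrow> jn_exceptional S t \<in> sets lebesgue"
    using M(3) jn_exceptional_sets by blast
  have "disjoint_family_on (\<lambda>S. jn_exceptional S t) M"
    using M(2) jn_exceptional_subset unfolding disjoint_family_on_def by blast
  then have exc_sum: "emeasure lebesgue (\<Union>S\<in>M. jn_exceptional S t)
      = (\<integral>\<^sup>+S. emeasure lebesgue (jn_exceptional S t) \<partial>count_space M)"
    using exc_sets M(1) by (intro emeasure_UN_countable)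
  have "emeasure lebesgue (jn_exceptional Q (t + drift_const * \<eta>))
      \<le> emeasure lebesgue (unstopped_far Q \<union> (\<Union>S\<in>M. jn_exceptional S t))"
    using jn_exceptional_subset_stopping[OF Q t] exc_sets M(1) Qd
    by (intro emeasure_mono) (auto simp: M_def intro!: sets.countable_UN'')
  also have "\<dots> \<le> emeasure lebesgue (unstopped_far Q) + emeasure lebesgue (\<Union>S\<in>M. jn_exceptional S t)"
    using exc_sets M(1) Qd by (intro emeasure_subadditive) (auto intro!: sets.countable_UN'')
  also have "\<dots> \<le> (\<integral>\<^sup>+S. ennreal r * emeasure lebesgue S \<partial>count_space M)"
    unfolding null_unstopped_far[OF Q] exc_sum
    using IH maximal_stopping(2) by (auto simp: M_def intro!: nn_integral_mono)
  also have "\<dots> = ennreal r * emeasure lebesgue (\<Union>M)"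
    by (simp add: emeasure_Union_dyadic_cubes[OF M] nn_integral_cmult)
  also have "\<dots> \<le> ennreal r * ennreal (measure lebesgue Q / 2)"
    using emeasure_Union_maximal_stopping[OF Q] by (intro mult_left_mono) (auto simp: M_def)
  also have "\<dots> = ennreal (r / 2) * emeasure lebesgue Q"
    using r by (simp add: emeasure_dyadic_cubes[OF Qd] ennreal_mult[symmetric] del: emeasure_completion)
  finally show ?thesis .
qed

lemma john_nirenberg:
  assumes "good_cube Q"
  shows "emeasure lebesgue (jn_exceptional Q (jn_base + real j * drift_const * \<eta>))
    \<le> ennreal ((1/2) ^ j) * emeasure lebesgue Q"
  using assms
proof (induction j arbitrary: Q)
  case 0
  then have "Q \<in> sets lebesgue" by (simp add: good_cube_def dyadic_cubes_sets)
  from emeasure_mono[OF jn_exceptional_subset this] show ?case by simp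
next
  case (Suc j)
  have "jn_base \<le> jn_base + real j * drift_const * \<eta>" using drift_const_pos eta_pos by simp
  from jn_step[OF Suc.IH this _ Suc.prems] show ?case by (simp add: algebra_simps)
qed

end

section \<open>Decomposition along the scales \<open>\<eta>_k = \<theta> s / 2^k\<close>\<close>

locale level_decomposition = dyadic_oscillation f \<delta> for f :: "real^'n::finite \<Rightarrow> real" and \<delta> +
  fixes s \<theta> :: real and q :: nat
  assumes s_pos: "0 < s" and theta_pos: "0 < \<theta>"
begin

definition eta_scale :: "nat \<Rightarrow> real" where
  "eta_scale k = \<theta> * s / 2 ^ k"

text \<open>\<open>tau k\<close> is the John--Nirenberg height reaching relative measure \<open>rho k\<close> at scale \<open>k\<close>;
  \<open>sigma\<close> accumulates these heights with enough slack for the drift between a bad cube and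
  its parent (see \<open>sigma_gap\<close>).\<close>
definition tau :: "nat \<Rightarrow> real" where
  "tau k = 4 powr (1 / \<delta>) * eta_scale k + real ((k + 1) * q) * drift_const * eta_scale k"

definition sigma :: "nat \<Rightarrow> real" where
  "sigma k = (\<Sum>i\<le>k. tau i) + 4 * drift_const * \<theta> * s - 2 * drift_const * eta_scale k"

definition rho :: "nat \<Rightarrow> real" where
  "rho k = (1/2) ^ ((k + 1) * q)"

definition far_set :: "(real^'n) set \<Rightarrow> nat \<Rightarrow> (real^'n) set" where
  "far_set P k = {x\<in>P - sharp_level (eta_scale 0). sigma k < \<bar>f x - avg P\<bar>}"

definition scale_index :: "(real^'n) set \<Rightarrow> nat" where
  "scale_index R = (LEAST i. eta_scale (Suc i) < osc R)"

lemma eta_scale_pos: "0 < eta_scale k"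
  using s_pos theta_pos by (simp add: eta_scale_def)

lemma eta_scale_antimono: "i \<le> k \<Longrightarrow> eta_scale k \<le> eta_scale i"
  using s_pos theta_pos by (simp add: eta_scale_def divide_left_mono)

lemma eta_scale_Suc: "eta_scale (Suc k) = eta_scale k / 2"
  by (simp add: eta_scale_def)

lemma far_set_sets [measurable]: "P \<in> dyadic_cubes \<Longrightarrow> far_set P k \<in> sets lebesgue"
  using eta_scale_pos[of 0] by (auto simp: far_set_def intro!: dyadic_cubes_sets)

lemma tau_nonneg: "0 \<le> tau k"
  using eta_scale_pos[of k] drift_const_pos by (simp add: tau_def)

lemma tau_le_sigma: "tau k \<le> sigma k"
proof -
  have "tau k \<le> (\<Sum>i\<le>k. tau i)" by (rule member_le_sum) (auto intro: tau_nonneg)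
  moreover have "eta_scale k \<le> \<theta> * s" using eta_scale_antimono[of 0 k] by (simp add: eta_scale_def)
  then have "2 * drift_const * eta_scale k \<le> 2 * drift_const * (\<theta> * s)"
    using drift_const_pos by (intro mult_left_mono) auto
  moreover have "0 < drift_const * \<theta> * s" using drift_const_pos s_pos theta_pos by simp
  ultimately show ?thesis unfolding sigma_def by linarith
qed

lemma sigma_gap:
  assumes "j < k"
  shows "sigma j + drift_const * eta_scale j + tau k \<le> sigma k"
proof -
  have "(\<Sum>i\<le>j. tau i) + tau k = (\<Sum>i\<in>insert k {..j}. tau i)" using assms by simp
  also have "\<dots> \<le> (\<Sum>i\<le>k. tau i)" by (rule sum_mono2) (use assms tau_nonneg in auto)
  finally have "(\<Sum>i\<le>j. tau i) + tau k \<le> (\<Sum>i\<le>k. tau i)" .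
  moreover have "drift_const * eta_scale k \<le> drift_const * (eta_scale j / 2)"
    using eta_scale_antimono[of "Suc j" k] assms drift_const_pos by (simp add: eta_scale_Suc)
  ultimately show ?thesis unfolding sigma_def by linarith
qed

lemma scale_index:
  assumes "eta_scale k < osc R" "osc R \<le> eta_scale 0"
  shows "scale_index R < k" "eta_scale (Suc (scale_index R)) < osc R"
    "osc R \<le> eta_scale (scale_index R)"
proof -
  have k: "k = Suc (k - 1)" using assms by (cases k) auto
  then have k1: "eta_scale (Suc (k - 1)) < osc R" using assms(1) by simp
  show "eta_scale (Suc (scale_index R)) < osc R"
    unfolding scale_index_def using k1 by (rule LeastI)
  have "scale_index R \<le> k - 1"
    unfolding scale_index_def using k1 by (rule Least_le)
  then show "scale_index R < k" using k by linarith
  show "osc R \<le> eta_scale (scale_index R)"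
  proof (cases "scale_index R")
    case (Suc j)
    then show ?thesis
      using not_less_Least[of j "\<lambda>i. eta_scale (Suc i) < osc R"] by (simp add: scale_index_def)
  qed (use assms in simp)
qed

end

lemma nn_integral_sum_emeasure_Int_le:
  fixes M :: "'a set set" and c :: "'i \<Rightarrow> ennreal"
  assumes M: "countable M" "disjoint_family_on (\<lambda>R. R) M" "\<And>R. R \<in> M \<Longrightarrow> R \<in> sets N"
    and sub: "\<And>R. R \<in> M \<Longrightarrow> R \<subseteq> P" and P: "P \<in> sets N" and A: "\<And>i. A i \<in> sets N"
  shows "(\<integral>\<^sup>+R. (\<Sum>i\<in>I. c i * emeasure N (A i \<inter> R)) \<partial>count_space M)
    \<le> (\<Sum>i\<in>I. c i * emeasure N (A i \<inter> P))"
proof -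
  have "(\<integral>\<^sup>+R. emeasure N (A i \<inter> R) \<partial>count_space M) \<le> emeasure N (A i \<inter> P)" for i
  proof -
    have "disjoint_family_on (\<lambda>R. A i \<inter> R) M"
      using M(2) unfolding disjoint_family_on_def by blast
    then have "(\<integral>\<^sup>+R. emeasure N (A i \<inter> R) \<partial>count_space M) = emeasure N (\<Union>R\<in>M. A i \<inter> R)"
      using M A by (intro emeasure_UN_countable[symmetric]) auto
    also have "\<dots> \<le> emeasure N (A i \<inter> P)" using sub A P by (intro emeasure_mono) auto
    finally show ?thesis .
  qed
  then show ?thesis
    by (simp add: nn_integral_sum nn_integral_cmult sum_mono mult_left_mono)
qed

locale level_cube = level_decomposition f \<delta> s \<theta> q for f :: "real^'n::finite \<Rightarrow> real" and \<delta> s \<theta> q +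
  fixes P :: "(real^'n) set" and k :: nat
  assumes P_cube: "P \<in> dyadic_cubes" and osc_P_scale: "osc P \<le> eta_scale k"
begin

sublocale john_nirenberg_cube f \<delta> P "eta_scale k"
  using P_cube osc_P_scale eta_scale_pos by unfold_locales auto

definition deep_bad_cubes :: "(real^'n) set set" where
  "deep_bad_cubes = {R\<in>maximal_cubes bad_cubes. osc R \<le> eta_scale 0}"

lemma deep_bad_cubes:
  "countable deep_bad_cubes" "disjoint_family_on (\<lambda>R. R) deep_bad_cubes"
  "deep_bad_cubes \<subseteq> dyadic_cubes" "\<And>R. R \<in> deep_bad_cubes \<Longrightarrow> R \<subseteq> P"
  using countable_subset[OF _ countable_maximal_bad] maximal_cubes_disjoint[OF bad_cubes_subset]
    maximal_bad_in_dyadic_cubes maximal_bad_subset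
  by (auto simp: deep_bad_cubes_def disjoint_family_on_def)

lemma scale_index_deep_bad:
  assumes "R \<in> deep_bad_cubes"
  shows "scale_index R < k" "eta_scale (Suc (scale_index R)) < osc R"
    "osc R \<le> eta_scale (scale_index R)"
  using scale_index[of k R] maximal_bad_mean_osc assms by (auto simp: deep_bad_cubes_def)

lemma emeasure_jn_exceptional_tau:
  "emeasure lebesgue (jn_exceptional P (tau k)) \<le> ennreal (rho k) * emeasure lebesgue P"
proof -
  have "tau k = jn_base + real ((k + 1) * q) * drift_const * eta_scale k"
    by (simp add: tau_def jn_base_def)
  then show ?thesis using john_nirenberg[OF good_cube_P, of "(k + 1) * q"]
    by (simp add: rho_def power_mult)
qed

text \<open>A point of \<open>far_set P k\<close> is either already exceptional for the John--Nirenberg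
  inequality at height \<open>tau k\<close>, or it lies in a maximal bad cube \<open>R\<close> at scale \<open>j < k\<close> whose
  parent average is close to \<open>avg P\<close>; then it is far at level \<open>j\<close> inside \<open>R\<close>.\<close>
lemma far_set_split:
  "far_set P k \<subseteq> jn_exceptional P (tau k) \<union> (\<Union>R\<in>deep_bad_cubes. far_set R (scale_index R))"
proof
  fix x assume x: "x \<in> far_set P k"
  then have xP: "x \<in> P" and x_low: "x \<notin> sharp_level (eta_scale 0)"
    and far: "sigma k < \<bar>f x - avg P\<bar>"
    by (auto simp: far_set_def)
  show "x \<in> jn_exceptional P (tau k) \<union> (\<Union>R\<in>deep_bad_cubes. far_set R (scale_index R))"
  proof (cases "x \<in> good_points")
    case True
    then show ?thesis using far tau_le_sigma[of k] xP by (auto simp: jn_exceptional_def)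
  next
    case False
    then obtain B where B: "B \<in> bad_cubes" "x \<in> B" using xP by (auto simp: good_points_def)
    then obtain R where R: "R \<in> maximal_cubes bad_cubes" "B \<subseteq> R"
      using maximal_cubes_exists[OF bad_cubes_subset B(1), of "dyadic_level P"] P_cube
      by (auto simp: bad_cubes_def intro: dyadic_level_mono)
    have xR: "x \<in> R" using R B by auto
    note R_props = maximal_bad_in_dyadic_cubes[OF R(1)] maximal_bad_subset[OF R(1)]
    show ?thesis
    proof (cases "tau k < \<bar>avg (dyadic_parent R) - avg P\<bar>")
      case True
      then show ?thesis using R xR R_props by (auto simp: jn_exceptional_def)
    next
      case False
      have "osc R \<le> eta_scale 0"
        using mean_osc_le_outside_sharp_level[OF _ x_low R_props(1) xR] eta_scale_pos[of 0] by simp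
      then have R_deep: "R \<in> deep_bad_cubes" using R(1) by (simp add: deep_bad_cubes_def)
      define j where "j = scale_index R"
      note j = scale_index_deep_bad[OF R_deep, folded j_def]
      have "osc (dyadic_parent R) \<le> eta_scale j"
        using good_cube_mean_osc_le[OF good_cube_parent_maximal_bad[OF R(1)]]
          eta_scale_antimono[of j k] j(1) by simp
      then have "\<bar>avg R - avg (dyadic_parent R)\<bar> \<le> drift_const * eta_scale j"
        using abs_avg_diff_parent_le[OF R_props(1) eta_scale_pos j(3)] by simp
      then have "sigma j < \<bar>f x - avg R\<bar>" using sigma_gap[OF j(1)] far False by linarith
      then have "x \<in> far_set R j" using xR x_low by (simp add: far_set_def)
      then show ?thesis using R_deep by (auto simp: j_def)
    qed
  qed
qed

end

context level_decomposition
begin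

lemma emeasure_far_set:
  "P \<in> dyadic_cubes \<Longrightarrow> osc P \<le> eta_scale k \<Longrightarrow>
    emeasure lebesgue (far_set P k) \<le> ennreal (rho k) * emeasure lebesgue P
      + (\<Sum>i<k. ennreal (rho i) * emeasure lebesgue (sharp_level (eta_scale (Suc i)) \<inter> P))"
proof (induction k arbitrary: P rule: less_induct)
  case (less k P)
  interpret level_cube f \<delta> s \<theta> q P k using less.prems by unfold_locales
  define \<mu> where "\<mu> i A = emeasure lebesgue (sharp_level (eta_scale (Suc i)) \<inter> A)" for i A
  note D = deep_bad_cubes
  have level_sets: "\<And>i. sharp_level (eta_scale i) \<in> sets lebesgue"
    using eta_scale_pos by (simp add: less_imp_le)
  have D_sets: "\<And>R. R \<in> deep_bad_cubes \<Longrightarrow> R \<in> sets lebesgue" using D(3) dyadic_cubes_sets by blast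
  have far_sets: "\<And>R. R \<in> deep_bad_cubes \<Longrightarrow> far_set R (scale_index R) \<in> sets lebesgue"
    using D(3) by auto
  have "disjoint_family_on (\<lambda>R. far_set R (scale_index R)) deep_bad_cubes"
    using D(2) unfolding disjoint_family_on_def far_set_def by blast
  then have far_sum: "emeasure lebesgue (\<Union>R\<in>deep_bad_cubes. far_set R (scale_index R))
      = (\<integral>\<^sup>+R. emeasure lebesgue (far_set R (scale_index R)) \<partial>count_space deep_bad_cubes)"
    using far_sets D(1) by (intro emeasure_UN_countable)
  have far_R: "emeasure lebesgue (far_set R (scale_index R)) \<le> (\<Sum>i<k. ennreal (rho i) * \<mu> i R)"
    if R: "R \<in> deep_bad_cubes" for R
  proof -
    define j where "j = scale_index R"
    note j = scale_index_deep_bad[OF R, folded j_def]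
    have "R \<subseteq> sharp_level (eta_scale (Suc j))"
      using dyadic_cube_subset_sharp_level[OF _ _ j(2)] D(3) R eta_scale_pos by (auto intro: less_imp_le)
    then have "\<mu> j R = emeasure lebesgue R" by (simp add: \<mu>_def Int_absorb1)
    moreover have "emeasure lebesgue (far_set R j) \<le> ennreal (rho j) * emeasure lebesgue R
        + (\<Sum>i<j. ennreal (rho i) * \<mu> i R)"
      using less.IH[OF j(1) _ j(3)] D(3) R by (auto simp: \<mu>_def)
    ultimately have "emeasure lebesgue (far_set R j) \<le> (\<Sum>i<Suc j. ennreal (rho i) * \<mu> i R)"
      by (simp add: add.commute)
    also have "\<dots> \<le> (\<Sum>i<k. ennreal (rho i) * \<mu> i R)"
      using j(1) by (intro sum_mono2) auto
    finally show ?thesis by (simp add: j_def)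
  qed
  have "emeasure lebesgue (far_set P k)
      \<le> emeasure lebesgue (jn_exceptional P (tau k) \<union> (\<Union>R\<in>deep_bad_cubes. far_set R (scale_index R)))"
    using far_set_split far_sets D(1) P_cube
    by (intro emeasure_mono) (auto intro!: sets.countable_UN'')
  also have "\<dots> \<le> emeasure lebesgue (jn_exceptional P (tau k))
      + (\<integral>\<^sup>+R. (\<Sum>i<k. ennreal (rho i) * \<mu> i R) \<partial>count_space deep_bad_cubes)"
    unfolding far_sum[symmetric] using far_sets D(1) P_cube far_R
    by (intro order_trans[OF emeasure_subadditive] add_left_mono)
      (auto intro!: sets.countable_UN'' nn_integral_mono simp: far_sum)
  also have "\<dots> \<le> ennreal (rho k) * emeasure lebesgue P + (\<Sum>i<k. ennreal (rho i) * \<mu> i P)"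
    unfolding \<mu>_def using D D_sets P_cube level_sets
    by (intro add_mono emeasure_jn_exceptional_tau nn_integral_sum_emeasure_Int_le)
      (auto intro: dyadic_cubes_sets)
  finally show ?case by (simp add: \<mu>_def)
qed

end

lemma sum_half_powers_le: "(\<Sum>i\<le>K. (1/2::real) ^ i) \<le> 2"
proof -
  have "(\<Sum>i\<le>K. (1/2::real) ^ i) = 2 - (1/2) ^ K" by (induction K) (auto simp: algebra_simps)
  then show ?thesis by simp
qed

lemma sum_weighted_half_powers_le: "(\<Sum>i\<le>K. real (i + 1) * (1/2::real) ^ i) \<le> 4"
proof -
  have "(\<Sum>i\<le>K. real (i + 1) * (1/2::real) ^ i) = 4 - real (K + 3) * (1/2) ^ K"
    by (induction K) (auto simp: field_simps)
  then show ?thesis by simp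
qed

text \<open>\<open>N\<close> is a weak-type bound for \<open>M^{#,d}_\<delta> f\<close>; the two conditions on \<open>\<theta>\<close> are what
  \<open>sigma_le\<close> and \<open>two_eta_scale_powr_less\<close> need.\<close>
locale level_bound = level_decomposition f \<delta> s \<theta> q for f :: "real^'n::finite \<Rightarrow> real" and \<delta> s \<theta> q +
  fixes p N :: real
  assumes p: "1 \<le> p" and N_pos: "0 < N" and q: "p + 1 \<le> real q"
    and sharp_weak: "\<And>\<eta>. 0 < \<eta> \<Longrightarrow> emeasure lebesgue (sharp_level \<eta>) \<le> ennreal ((N / \<eta>) powr p)"
    and theta_sigma: "\<theta> * (2 * 4 powr (1/\<delta>) + 4 * real q * drift_const + 4 * drift_const) \<le> 1/2"
    and theta_small: "\<theta> * 2 powr (1/\<delta>) * 8 < 1"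
begin

definition weak_bound :: "nat \<Rightarrow> real" where
  "weak_bound k = (N / eta_scale k) powr p"

lemma weak_bound_pos: "0 < weak_bound k"
  using N_pos eta_scale_pos[of k] by (simp add: weak_bound_def)

lemma weak_bound_eq: "weak_bound k = weak_bound 0 * (2 powr p) ^ k"
proof -
  have eq: "N / eta_scale k = (N / eta_scale 0) * 2 ^ k" by (simp add: eta_scale_def)
  have "weak_bound k = (N / eta_scale 0) powr p * (2 ^ k) powr p"
    unfolding weak_bound_def eq using N_pos eta_scale_pos[of 0] by (intro powr_mult)
  also have "((2::real) ^ k) powr p = (2 powr p) ^ k"
    by (simp add: powr_realpow[symmetric] powr_powr mult.commute powr_power)
  finally show ?thesis by (simp add: weak_bound_def)
qed

lemma emeasure_sharp_level_scale: "emeasure lebesgue (sharp_level (eta_scale k)) \<le> ennreal (weak_bound k)"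
  using sharp_weak[OF eta_scale_pos] by (simp add: weak_bound_def)

lemma rho_weak_bound_le: "rho i * weak_bound (Suc i) \<le> weak_bound 0 * (1/2) ^ (i + 1)"
proof -
  have "2 powr p \<le> 2 powr (real q - 1)" using q by (intro powr_mono) auto
  also have "\<dots> = 2 ^ q / 2" by (simp add: powr_diff powr_realpow)
  finally have half: "(1/2) ^ q * 2 powr p \<le> (1/2::real)" by (simp add: field_simps)
  have r: "(1/2::real) ^ ((i + 1) * q) = ((1/2) ^ q) ^ (i + 1)"
    by (metis power_mult mult.commute)
  have "rho i * weak_bound (Suc i) = weak_bound 0 * ((1/2) ^ q * 2 powr p) ^ (i + 1)"
    unfolding rho_def weak_bound_eq[of "Suc i"] r power_mult_distrib by simp
  also have "\<dots> \<le> weak_bound 0 * (1/2) ^ (i + 1)"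
    using half weak_bound_pos[of 0] by (intro mult_left_mono power_mono) auto
  finally show ?thesis .
qed

lemma sigma_le: "sigma K \<le> s / 2"
proof -
  have eta: "eta_scale i = \<theta> * s * (1/2) ^ i" for i by (simp add: eta_scale_def field_simps)
  have "(\<Sum>i\<le>K. tau i) = \<theta> * s * (4 powr (1/\<delta>) * (\<Sum>i\<le>K. (1/2) ^ i)
      + real q * drift_const * (\<Sum>i\<le>K. real (i + 1) * (1/2) ^ i))"
    by (simp add: tau_def eta sum.distrib sum_distrib_left sum_distrib_right algebra_simps)
  also have "\<dots> \<le> \<theta> * s * (4 powr (1/\<delta>) * 2 + real q * drift_const * 4)"
    using sum_half_powers_le[of K] sum_weighted_half_powers_le[of K] drift_const_pos s_pos theta_pos
    by (intro mult_left_mono add_mono) auto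
  finally have "sigma K \<le> s * (\<theta> * (2 * 4 powr (1/\<delta>) + 4 * real q * drift_const + 4 * drift_const))"
    using mult_pos_pos[OF drift_const_pos eta_scale_pos[of K]] unfolding sigma_def
    by (simp add: algebra_simps)
  also have "\<dots> \<le> s * (1/2)" using theta_sigma s_pos by (intro mult_left_mono) auto
  finally show ?thesis by simp
qed

lemma two_eta_scale_powr_less: "2 * eta_scale K powr \<delta> < (s / 8) powr \<delta>"
proof -
  have "eta_scale K * 2 powr (1/\<delta>) \<le> \<theta> * s * 2 powr (1/\<delta>)"
    using eta_scale_antimono[of 0 K] by (intro mult_right_mono) (auto simp: eta_scale_def)
  also have "\<dots> < s / 8" using theta_small s_pos by (simp add: algebra_simps)
  finally have "(eta_scale K * 2 powr (1/\<delta>)) powr \<delta> < (s / 8) powr \<delta>"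
    using eta_scale_pos[of K] delta_pos by (intro powr_less_mono2) auto
  moreover have "(eta_scale K * 2 powr (1/\<delta>)) powr \<delta> = 2 * eta_scale K powr \<delta>"
    using eta_scale_pos[of K] delta_pos by (simp add: powr_mult powr_powr)
  ultimately show ?thesis by simp
qed

end

context level_bound
begin

lemma exists_scale_between:
  assumes "weak_bound 0 < m"
  shows "\<exists>K. weak_bound K < m \<and> m \<le> weak_bound (Suc K)"
proof -
  have "1 < 2 powr p" using p by simp
  then obtain n where "m / weak_bound 0 < (2 powr p) ^ n" using real_arch_pow by blast
  then have ex: "\<exists>k. m \<le> weak_bound k"
    using weak_bound_pos[of 0] weak_bound_eq[of n] by (auto simp: field_simps intro!: exI[of _ n])
  define K1 where "K1 = (LEAST k. m \<le> weak_bound k)"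
  have K1: "m \<le> weak_bound K1" unfolding K1_def using ex by (rule LeastI_ex)
  then obtain K where K: "K1 = Suc K" using assms by (cases K1) auto
  have "weak_bound K < m"
    using not_less_Least[of K "\<lambda>k. m \<le> weak_bound k"] K unfolding K1_def by simp
  then show ?thesis using K1 K by blast
qed

lemma weighted_levels_le:
  assumes C: "C \<in> dyadic_cubes" and "measure lebesgue C \<le> weak_bound (Suc K)"
  shows "ennreal (rho K) * emeasure lebesgue C
      + (\<Sum>i<K. ennreal (rho i) * emeasure lebesgue (sharp_level (eta_scale (Suc i)) \<inter> C))
    \<le> ennreal (weak_bound 0)"
proof -
  have weight: "ennreal (rho i) * ennreal (weak_bound (Suc i)) \<le> ennreal (weak_bound 0 * (1/2) ^ (i + 1))"
    for i using rho_weak_bound_le[of i] weak_bound_pos[of "Suc i"]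
    by (simp add: rho_def ennreal_mult[symmetric] ennreal_leI)
  have "emeasure lebesgue C \<le> ennreal (weak_bound (Suc K))"
    using assms by (simp add: emeasure_dyadic_cubes ennreal_leI del: emeasure_completion)
  then have "ennreal (rho K) * emeasure lebesgue C \<le> ennreal (rho K) * ennreal (weak_bound (Suc K))"
    by (rule mult_left_mono) simp
  then have "ennreal (rho K) * emeasure lebesgue C \<le> ennreal (weak_bound 0 * (1/2) ^ (K + 1))"
    using weight[of K] by (rule order_trans)
  moreover have "ennreal (rho i) * emeasure lebesgue (sharp_level (eta_scale (Suc i)) \<inter> C)
      \<le> ennreal (weak_bound 0 * (1/2) ^ (i + 1))" for i
  proof -
    have "emeasure lebesgue (sharp_level (eta_scale (Suc i)) \<inter> C) \<le> ennreal (weak_bound (Suc i))"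
      using sharp_level_sets[OF less_imp_le[OF eta_scale_pos]]
      by (intro order_trans[OF emeasure_mono emeasure_sharp_level_scale]) auto
    then have "ennreal (rho i) * emeasure lebesgue (sharp_level (eta_scale (Suc i)) \<inter> C)
        \<le> ennreal (rho i) * ennreal (weak_bound (Suc i))"
      by (rule mult_left_mono) simp
    then show ?thesis using weight[of i] by (rule order_trans)
  qed
  ultimately have "ennreal (rho K) * emeasure lebesgue C
      + (\<Sum>i<K. ennreal (rho i) * emeasure lebesgue (sharp_level (eta_scale (Suc i)) \<inter> C))
    \<le> ennreal (weak_bound 0 * (1/2) ^ (K + 1)) + (\<Sum>i<K. ennreal (weak_bound 0 * (1/2) ^ (i + 1)))"
    by (intro add_mono sum_mono)
  also have "\<dots> = (\<Sum>i<Suc K. ennreal (weak_bound 0 * (1/2) ^ (i + 1)))"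
    by (simp add: add.commute)
  also have "\<dots> = ennreal (weak_bound 0 * (1/2) * (\<Sum>i\<le>K. (1/2) ^ i))"
    using weak_bound_pos[of 0] by (simp add: sum_ennreal lessThan_Suc_atMost sum_distrib_left)
  also have "\<dots> \<le> ennreal (weak_bound 0)"
    using sum_half_powers_le[of K] weak_bound_pos[of 0] by (intro ennreal_leI) simp
  finally show ?thesis .
qed

text \<open>A cube \<open>C\<close> larger than \<open>weak_bound 0\<close> is not contained in the level set of the first
  scale \<open>K\<close> with \<open>weak_bound K < |C|\<close>, so \<open>osc C \<le> eta_scale K\<close>; as \<open>|f| \<le> s/8\<close> on half of \<open>C\<close>,
  its average is at most \<open>s/4\<close>, and \<open>{|f| > s}\<close> inside \<open>C\<close> is covered by \<open>E_0\<close> and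
  \<open>far_set C K\<close>.\<close>
lemma emeasure_cube_level_le:
  assumes C: "C \<in> dyadic_cubes" and big: "weak_bound 0 < measure lebesgue C"
    and half: "emeasure lebesgue {x. s / 8 < \<bar>f x\<bar>} \<le> ennreal (measure lebesgue C / 2)"
  shows "emeasure lebesgue (C \<inter> {x. s < \<bar>f x\<bar>}) \<le> ennreal (2 * weak_bound 0)"
proof -
  obtain K where K: "weak_bound K < measure lebesgue C" "measure lebesgue C \<le> weak_bound (Suc K)"
    using exists_scale_between[OF big] by blast
  have "\<not> C \<subseteq> sharp_level (eta_scale K)"
  proof
    assume "C \<subseteq> sharp_level (eta_scale K)"
    then have "emeasure lebesgue C \<le> ennreal (weak_bound K)"
      using sharp_level_sets[OF less_imp_le[OF eta_scale_pos]]
      by (intro order_trans[OF emeasure_mono emeasure_sharp_level_scale]) auto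
    then show False using K(1) weak_bound_pos[of K]
      by (simp add: emeasure_dyadic_cubes[OF C] del: emeasure_completion)
  qed
  then have osc_C: "osc C \<le> eta_scale K"
    using mean_osc_le_outside_sharp_level[OF _ _ C] eta_scale_pos[of K] by (auto intro: less_imp_le)
  have "emeasure lebesgue (C \<inter> {x. s / 8 < \<bar>f x\<bar>}) \<le> emeasure lebesgue {x. s / 8 < \<bar>f x\<bar>}"
    by (intro emeasure_mono level_set_sets) auto
  then have "\<bar>avg C\<bar> \<le> 2 * (s / 8)"
    using half s_pos
    by (intro abs_avg_le_of_small_level_set[OF C osc_C _ two_eta_scale_powr_less]) auto
  then have "C \<inter> {x. s < \<bar>f x\<bar>} \<subseteq> sharp_level (eta_scale 0) \<union> far_set C K"
    using sigma_le[of K] s_pos by (auto simp: far_set_def)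
  moreover have sets: "sharp_level (eta_scale 0) \<in> sets lebesgue" "far_set C K \<in> sets lebesgue"
    using C eta_scale_pos[of 0] by (auto intro: less_imp_le)
  ultimately have "emeasure lebesgue (C \<inter> {x. s < \<bar>f x\<bar>})
      \<le> emeasure lebesgue (sharp_level (eta_scale 0) \<union> far_set C K)"
    by (intro emeasure_mono) auto
  also have "\<dots> \<le> emeasure lebesgue (sharp_level (eta_scale 0)) + emeasure lebesgue (far_set C K)"
    using sets by (rule emeasure_subadditive)
  also have "\<dots> \<le> ennreal (weak_bound 0) + ennreal (weak_bound 0)"
    using emeasure_far_set[OF C osc_C] weighted_levels_le[OF C K(2)] emeasure_sharp_level_scale[of 0]
    by (intro add_mono) auto
  finally show ?thesis using weak_bound_pos[of 0] by (simp add: ennreal_plus[symmetric] del: ennreal_plus)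
qed

lemma emeasure_level_le:
  assumes fin: "emeasure lebesgue {x. s / 8 < \<bar>f x\<bar>} < \<infinity>"
  shows "emeasure lebesgue {x. s < \<bar>f x\<bar>} \<le> of_nat CARD('n \<Rightarrow> bool) * ennreal (2 * weak_bound 0)"
proof (rule emeasure_le_by_quadrant_cubes)
  show "{x. s < \<bar>f x\<bar>} \<in> sets lebesgue" by measurable
  fix \<sigma> :: "'n \<Rightarrow> bool"
  define a where "a = measure lebesgue {x. s / 8 < \<bar>f x\<bar>}"
  have a: "emeasure lebesgue {x. s / 8 < \<bar>f x\<bar>} = ennreal a"
    using fin by (simp add: a_def emeasure_eq_ennreal_measure less_top del: emeasure_completion)
  obtain J0 where J0: "\<And>J. J0 \<le> J \<Longrightarrow> max (weak_bound 0) (2 * a) < measure lebesgue (quadrant_cube \<sigma> J)"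
    using quadrant_cube_eventually_large by blast
  have "emeasure lebesgue ({x. s < \<bar>f x\<bar>} \<inter> quadrant_cube \<sigma> J) \<le> ennreal (2 * weak_bound 0)"
    if "J0 \<le> J" for J
    using emeasure_cube_level_le[of "quadrant_cube \<sigma> J"] J0[OF that] a
    by (simp add: quadrant_cube_def Int_commute ennreal_leI del: emeasure_completion)
  then show "\<exists>J0. \<forall>J\<ge>J0. emeasure lebesgue ({x. s < \<bar>f x\<bar>} \<inter> quadrant_cube \<sigma> J) \<le> ennreal (2 * weak_bound 0)"
    by blast
qed

end

section \<open>Weak-type norms\<close>

lemma emeasure_level_le_of_weak_Lp_norm:
  fixes g :: "real^'n \<Rightarrow> ennreal"
  assumes W: "weak_Lp_norm p g \<le> ennreal N" and N: "0 \<le> N" and p: "0 < p" and \<eta>: "0 < \<eta>"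
  shows "emeasure lebesgue {x. ennreal \<eta> < g x} \<le> ennreal ((N / \<eta>) powr p)"
proof -
  define A where "A = {x. ennreal \<eta> < g x}"
  define m where "m = measure lebesgue A"
  have "(if emeasure lebesgue A = \<infinity> then \<infinity> else ennreal (\<eta> * m powr (1 / p)))
      \<le> weak_Lp_norm p g"
    unfolding weak_Lp_norm_def A_def m_def using \<eta> by (intro SUP_upper) auto
  then have bound: "(if emeasure lebesgue A = \<infinity> then \<infinity> else ennreal (\<eta> * m powr (1 / p)))
      \<le> ennreal N"
    using W by (rule order_trans)
  then have fin: "emeasure lebesgue A = ennreal m"
    by (cases "emeasure lebesgue A = \<infinity>") (simp_all add: m_def emeasure_eq_ennreal_measure top_unique)
  then have "ennreal (\<eta> * m powr (1 / p)) \<le> ennreal N" using bound by simp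
  moreover have "0 \<le> \<eta> * m powr (1 / p)" using \<eta> by simp
  ultimately have "\<eta> * m powr (1 / p) \<le> N" using N by simp
  then have "m powr (1 / p) \<le> N / \<eta>" using \<eta> by (simp add: field_simps)
  then have "(m powr (1 / p)) powr p \<le> (N / \<eta>) powr p" using p by (intro powr_mono2) auto
  then show ?thesis using fin p by (simp add: powr_powr m_def A_def ennreal_leI)
qed

lemma weak_Lp_norm_le:
  fixes g :: "real^'n \<Rightarrow> ennreal"
  assumes "\<And>t. 0 < t \<Longrightarrow> emeasure lebesgue {x. ennreal t < g x} < \<infinity>"
    and "\<And>t. 0 < t \<Longrightarrow> t * measure lebesgue {x. ennreal t < g x} powr (1 / p) \<le> C"
  shows "weak_Lp_norm p g \<le> ennreal C"
  unfolding weak_Lp_norm_def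
proof (rule SUP_least)
  fix t :: real assume "t \<in> {0<..}"
  then show "(if emeasure lebesgue {x. ennreal t < g x} = \<infinity> then \<infinity>
      else ennreal (t * measure lebesgue {x. ennreal t < g x} powr (1 / p))) \<le> ennreal C"
    using assms[of t] by (simp add: ennreal_leI less_top[symmetric])
qed

context dyadic_oscillation
begin

text \<open>With \<open>\<theta> = 1 / (scale_constant * p)\<close> and \<open>q = \<lceil>p\<rceil> + 1\<close> the assumptions of
  \<open>level_bound\<close> hold; this is where the factor \<open>p\<close> of the estimate comes from.\<close>
definition scale_constant :: real where
  "scale_constant = 4 * 4 powr (1 / \<delta>) + 32 * drift_const + 8 * 2 powr (1 / \<delta>) + 1"

lemma scale_constant_pos: "0 < scale_constant"
  using drift_const_pos by (simp add: scale_constant_def add_pos_pos)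

lemma level_bound_instance:
  assumes p: "1 \<le> p" and N: "0 < N" and s: "0 < s"
    and sharp_weak: "\<And>\<eta>. 0 < \<eta> \<Longrightarrow> emeasure lebesgue (sharp_level \<eta>) \<le> ennreal ((N / \<eta>) powr p)"
  shows "level_bound f \<delta> s (1 / (scale_constant * p)) (nat \<lceil>p\<rceil> + 1) p N"
proof -
  define M L \<theta> where "M = scale_constant" and "L = drift_const" and "\<theta> = 1 / (scale_constant * p)"
  define q where "q = nat \<lceil>p\<rceil> + 1"
  have "real q = real_of_int \<lceil>p\<rceil> + 1" using p by (simp add: q_def)
  then have q: "p + 1 \<le> real q" "real q \<le> p + 2"
    using le_of_int_ceiling[of p] of_int_ceiling_le_add_one[of p] by linarith+
  have pos: "0 < M" "0 < L" "0 < 4 powr (1/\<delta>)" "0 < 2 powr (1/\<delta>)"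
    using scale_constant_pos drift_const_pos by (simp_all add: M_def L_def)
  have "2 * 4 powr (1/\<delta>) + 4 * real q * L + 4 * L \<le> p * (2 * 4 powr (1/\<delta>) + 16 * L)"
  proof -
    have "real q * L \<le> 3 * (p * L)" using q p pos by (simp add: mult_right_mono mult.assoc[symmetric])
    moreover have "4 powr (1/\<delta>) \<le> p * 4 powr (1/\<delta>)" "L \<le> p * L" using p pos by simp_all
    moreover have "p * (2 * 4 powr (1/\<delta>) + 16 * L) = 2 * (p * 4 powr (1/\<delta>)) + 16 * (p * L)"
      by (simp add: algebra_simps)
    ultimately show ?thesis by linarith
  qed
  then have "\<theta> * (2 * 4 powr (1/\<delta>) + 4 * real q * L + 4 * L)
      \<le> \<theta> * (p * (2 * 4 powr (1/\<delta>) + 16 * L))"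
    using p pos by (intro mult_left_mono) (auto simp: \<theta>_def M_def)
  also have "\<dots> = (2 * 4 powr (1/\<delta>) + 16 * L) / M" using p by (simp add: \<theta>_def M_def)
  also have "\<dots> \<le> 1/2"
  proof -
    have "2 * (2 * 4 powr (1/\<delta>) + 16 * L) \<le> M"
      using pos(4) unfolding M_def L_def scale_constant_def by (simp add: ring_distribs)
    then show ?thesis using pos(1) by (simp add: pos_divide_le_eq)
  qed
  finally have theta_sigma: "\<theta> * (2 * 4 powr (1/\<delta>) + 4 * real q * L + 4 * L) \<le> 1/2" .
  have "\<theta> * 2 powr (1/\<delta>) * 8 = (8 * 2 powr (1/\<delta>)) / (M * p)" by (simp add: \<theta>_def M_def)
  also have "\<dots> \<le> (8 * 2 powr (1/\<delta>)) / M" using p pos by (intro divide_left_mono) auto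
  also have "\<dots> < 1"
  proof -
    have "8 * 2 powr (1/\<delta>) < M" using pos unfolding M_def L_def scale_constant_def by linarith
    then show ?thesis using pos(1) by (simp add: pos_divide_less_eq)
  qed
  finally have theta_small: "\<theta> * 2 powr (1/\<delta>) * 8 < 1" .
  show ?thesis
    using p N s q(1) sharp_weak theta_sigma theta_small pos
    by unfold_locales (auto simp: M_def L_def \<theta>_def q_def)
qed

lemma level_set_estimate:
  assumes p: "1 \<le> p" and N: "0 < N" and t: "0 < t"
    and sharp_weak: "\<And>\<eta>. 0 < \<eta> \<Longrightarrow> emeasure lebesgue (sharp_level \<eta>) \<le> ennreal ((N / \<eta>) powr p)"
    and fin: "emeasure lebesgue {x. t / 8 < \<bar>f x\<bar>} < \<infinity>"
  shows "t * measure lebesgue {x. t < \<bar>f x\<bar>} powr (1 / p)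
    \<le> 2 * real CARD('n \<Rightarrow> bool) * scale_constant * p * N"
proof -
  define \<theta> where "\<theta> = 1 / (scale_constant * p)"
  define K where "K = 2 * real CARD('n \<Rightarrow> bool)"
  interpret level_bound f \<delta> t \<theta> "nat \<lceil>p\<rceil> + 1" p N
    unfolding \<theta>_def using level_bound_instance[OF p N t sharp_weak] .
  have "0 < CARD('n \<Rightarrow> bool)" by (rule zero_less_card_finite)
  then have K: "1 \<le> K" unfolding K_def by linarith
  have \<theta>: "0 < \<theta>" using p scale_constant_pos by (simp add: \<theta>_def)
  then have Nt: "0 < N / (\<theta> * t)" using N t by simp
  define m where "m = measure lebesgue {x. t < \<bar>f x\<bar>}"
  have "of_nat CARD('n \<Rightarrow> bool) * ennreal (2 * weak_bound 0) = ennreal (K * (N / (\<theta> * t)) powr p)"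
    by (simp add: K_def weak_bound_def eta_scale_def ennreal_of_nat_eq_real_of_nat ennreal_mult'
        mult.left_commute mult.assoc)
  then have le: "emeasure lebesgue {x. t < \<bar>f x\<bar>} \<le> ennreal (K * (N / (\<theta> * t)) powr p)"
    using emeasure_level_le[OF fin] by simp
  have "m \<le> K * (N / (\<theta> * t)) powr p"
    unfolding m_def measure_def using enn2real_mono[OF le] K by (simp del: emeasure_completion)
  then have "m powr (1/p) \<le> (K * (N / (\<theta> * t)) powr p) powr (1/p)"
    using p by (intro powr_mono2) (auto simp: m_def)
  also have "\<dots> = K powr (1/p) * (N / (\<theta> * t))"
    using K Nt p N t \<theta> by (simp add: powr_mult powr_powr)
  also have "\<dots> \<le> K * (N / (\<theta> * t))"
    using K p Nt powr_mono[of "1/p" 1 K] by (intro mult_right_mono) auto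
  finally have "t * m powr (1/p) \<le> t * (K * (N / (\<theta> * t)))" using t by (intro mult_left_mono) auto
  also have "\<dots> = K * scale_constant * p * N" using t p scale_constant_pos by (simp add: \<theta>_def field_simps)
  finally show ?thesis by (simp add: m_def K_def)
qed

lemma weak_Lp_norm_le_sharp:
  assumes p: "1 \<le> p" and fin: "\<And>t. 0 < t \<Longrightarrow> emeasure lebesgue {x. t < \<bar>f x\<bar>} < \<infinity>"
  shows "weak_Lp_norm p (\<lambda>x. ennreal \<bar>f x\<bar>)
    \<le> ennreal (2 * real CARD('n \<Rightarrow> bool) * scale_constant * p) * weak_Lp_norm p (sharp_max_dyadic \<delta> f)"
proof (cases "weak_Lp_norm p (sharp_max_dyadic \<delta> f)")
  case (real W)
  define c where "c = 2 * real CARD('n \<Rightarrow> bool) * scale_constant * p"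
  have c: "0 < c" using p scale_constant_pos by (simp add: c_def)
  have levels: "{x. ennreal t < ennreal \<bar>f x\<bar>} = {x. t < \<bar>f x\<bar>}" if "0 < t" for t
    using that by (auto simp: ennreal_less_iff)
  have "t * measure lebesgue {x. t < \<bar>f x\<bar>} powr (1 / p) \<le> c * W" if t: "0 < t" for t
  proof (rule field_le_epsilon)
    fix e :: real assume e: "0 < e"
    have "weak_Lp_norm p (sharp_max_dyadic \<delta> f) \<le> ennreal (W + e / c)"
      using real c e by (simp add: ennreal_leI)
    moreover have "0 < W + e / c" using real c e by (simp add: add_nonneg_pos)
    ultimately have "t * measure lebesgue {x. t < \<bar>f x\<bar>} powr (1 / p)
        \<le> 2 * real CARD('n \<Rightarrow> bool) * scale_constant * p * (W + e / c)"
      using p t fin[of "t / 8"]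
      by (intro level_set_estimate) (auto simp: sharp_level_def intro!: emeasure_level_le_of_weak_Lp_norm)
    then have "t * measure lebesgue {x. t < \<bar>f x\<bar>} powr (1 / p) \<le> c * (W + e / c)"
      unfolding c_def[symmetric] .
    then show "t * measure lebesgue {x. t < \<bar>f x\<bar>} powr (1 / p) \<le> c * W + e"
      using c by (simp add: distrib_left)
  qed
  then have "weak_Lp_norm p (\<lambda>x. ennreal \<bar>f x\<bar>) \<le> ennreal (c * W)"
    using fin by (intro weak_Lp_norm_le) (simp_all add: levels)
  then show ?thesis using real c by (simp add: c_def ennreal_mult)
qed (use p scale_constant_pos in \<open>simp add: ennreal_mult_top\<close>)

end

theorem lemma3p2:
  fixes \<delta> :: real
  assumes "0 < \<delta>" and "\<delta> < 1"
  shows "\<exists>c::real. c > 0 \<and>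
    (\<forall>(p::real) (f :: real ^ 'n \<Rightarrow> real).
       1 \<le> p \<longrightarrow> locally_integrable f \<longrightarrow>
       (\<forall>t>0. emeasure lebesgue {x. t < \<bar>f x\<bar>} < \<infinity>) \<longrightarrow>
       weak_Lp_norm p (\<lambda>x. ennreal \<bar>f x\<bar>)
         \<le> ennreal (c * p) * weak_Lp_norm p (sharp_max_dyadic \<delta> f))"
proof -
  define c where "c = 2 * real CARD('n \<Rightarrow> bool) * (4 * 4 powr (1 / \<delta>)
    + 32 * (2 ^ (CARD('n) + 1) + 1) powr (1 / \<delta>) + 8 * 2 powr (1 / \<delta>) + 1)"
  show ?thesis
  proof (intro exI[of _ c] conjI allI impI)
    have "0 < 4 * 4 powr (1 / \<delta>) + 32 * (2 ^ (CARD('n) + 1) + 1) powr (1 / \<delta>)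
        + 8 * 2 powr (1 / \<delta>) + (1::real)"
      by (intro add_nonneg_pos add_nonneg_nonneg) simp_all
    then show "0 < c" unfolding c_def by (intro mult_pos_pos) simp_all
    fix p :: real and f :: "real^'n \<Rightarrow> real"
    assume p: "1 \<le> p" and f: "locally_integrable f"
      and fin: "\<forall>t>0. emeasure lebesgue {x. t < \<bar>f x\<bar>} < \<infinity>"
    interpret dyadic_oscillation f \<delta>
      using assms f locally_integrable_on_dyadic_cubes by unfold_locales (auto simp: locally_integrable_def)
    have "c = 2 * real CARD('n \<Rightarrow> bool) * scale_constant"
      by (simp add: c_def scale_constant_def drift_const_def)
    then show "weak_Lp_norm p (\<lambda>x. ennreal \<bar>f x\<bar>)
        \<le> ennreal (c * p) * weak_Lp_norm p (sharp_max_dyadic \<delta> f)"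
      using weak_Lp_norm_le_sharp[OF p] fin by (simp add: mult.assoc)
  qed
qed

end
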